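(* Let $X$ be an affine algebraic manifold whose group $\mathrm{Aut}\,X$ of algebraic automorphisms acts transitively on $X$, and let $T$ be the $\mathbb C[X]$-module of all algebraic vector fields on $X$. Suppose there is a $\mathbb C[X]$-submodule $L\subset T$ such that $L\subset\mathrm{Lie}_{alg}(X)$ and such that the fiber $\{\nu(x_0):\nu\in L\}$ of $L$ at some point $x_0\in X$ contains a generating subset of $T_{x_0}X$. Then $X$ has the algebraic density property.
   Context: $\mathbb C[X]$ is the algebra of regular functions. An algebraic vector field is completely integrable if its (holomorphic) flow exists for all complex times. $\mathrm{Lie}_{alg}(X)$ is the Lie algebra generated by completely integrable algebraic vector fields on $X$; $X$ has the algebraic density property if $\mathrm{Lie}_{alg}(X)$ equals the Lie algebra of all algebraic vector fields on $X$. A finite subset $F\subset T_{x_0}X$ is a generating subset if the linear span of its orbit under the (differentials of the) isotropy group $(\mathrm{Aut}\,X)_{x_0}$ is all of $T_{x_0}X$. *)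

theory Defs
  imports "HOL-Analysis.Analysis"
begin

text \<open>Points of the ambient affine space C^n, with n = CARD('n) for a finite index type 'n.\<close>
type_synonym 'n pt = "'n \<Rightarrow> complex"
type_synonym 'n fn = "'n pt \<Rightarrow> complex"
type_synonym 'n vfield = "'n \<Rightarrow> 'n fn"

inductive_set poly_fun :: "('n::finite) fn set" where
  const: "(\<lambda>x. c) \<in> poly_fun"
| coord: "(\<lambda>x. x i) \<in> poly_fun"
| add: "p \<in> poly_fun \<Longrightarrow> q \<in> poly_fun \<Longrightarrow> (\<lambda>x. p x + q x) \<in> poly_fun"
| mult: "p \<in> poly_fun \<Longrightarrow> q \<in> poly_fun \<Longrightarrow> (\<lambda>x. p x * q x) \<in> poly_fun"

definition algebraic_set :: "('n::finite) pt set \<Rightarrow> bool" where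
  "algebraic_set X \<longleftrightarrow> (\<exists>F. F \<subseteq> poly_fun \<and> X = {x. \<forall>f\<in>F. f x = 0})"

definition van_ideal :: "('n::finite) pt set \<Rightarrow> 'n fn set" where
  "van_ideal X = {f \<in> poly_fun. \<forall>x\<in>X. f x = 0}"

text \<open>Regular functions C[X], represented as restrictions of polynomials, extended by 0 off X.\<close>
definition reg :: "('n::finite) pt set \<Rightarrow> 'n fn set" where
  "reg X = {g. \<exists>p\<in>poly_fun. g = (\<lambda>x. if x \<in> X then p x else 0)}"

definition pd :: "('n::finite) fn \<Rightarrow> 'n \<Rightarrow> 'n pt \<Rightarrow> complex" where
  "pd f i x = deriv (\<lambda>t. f (x(i := t))) (x i)"

definition tangent_space :: "('n::finite) pt set \<Rightarrow> 'n pt \<Rightarrow> 'n pt set" where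
  "tangent_space X x0 = {v. \<forall>f\<in>van_ideal X. (\<Sum>j\<in>UNIV. pd f j x0 * v j) = 0}"

text \<open>Algebraic vector fields on X: tuples of regular functions tangent to X
  (these form the C[X]-module T of derivations of C[X]).\<close>
definition VF :: "('n::finite) pt set \<Rightarrow> 'n vfield set" where
  "VF X = {v. (\<forall>i. v i \<in> reg X) \<and>
     (\<forall>f\<in>van_ideal X. \<forall>x\<in>X. (\<Sum>j\<in>UNIV. v j x * pd f j x) = 0)}"

definition vf_apply :: "('n::finite) pt set \<Rightarrow> 'n vfield \<Rightarrow> 'n fn \<Rightarrow> 'n fn" where
  "vf_apply X v g = (let p = (SOME p. p \<in> poly_fun \<and> (\<forall>x\<in>X. g x = p x)) in
     (\<lambda>x. if x \<in> X then (\<Sum>j\<in>UNIV. v j x * pd p j x) else 0))"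

definition vf_bracket :: "('n::finite) pt set \<Rightarrow> 'n vfield \<Rightarrow> 'n vfield \<Rightarrow> 'n vfield" where
  "vf_bracket X v w = (\<lambda>i x. vf_apply X v (w i) x - vf_apply X w (v i) x)"

definition complete_vf :: "('n::finite) pt set \<Rightarrow> 'n vfield \<Rightarrow> bool" where
  "complete_vf X v \<longleftrightarrow> v \<in> VF X \<and>
     (\<forall>x\<in>X. \<exists>\<gamma>::complex \<Rightarrow> 'n pt. \<gamma> 0 = x \<and> (\<forall>t. \<gamma> t \<in> X) \<and>
        (\<forall>t i. ((\<lambda>s. \<gamma> s i) has_field_derivative v i (\<gamma> t)) (at t)))"

inductive_set Lie_alg :: "('n::finite) pt set \<Rightarrow> 'n vfield set" for X where
  gen: "complete_vf X v \<Longrightarrow> v \<in> Lie_alg X"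
| zero: "(\<lambda>i x. 0) \<in> Lie_alg X"
| add: "v \<in> Lie_alg X \<Longrightarrow> w \<in> Lie_alg X \<Longrightarrow> (\<lambda>i x. v i x + w i x) \<in> Lie_alg X"
| smult: "v \<in> Lie_alg X \<Longrightarrow> (\<lambda>i x. c * v i x) \<in> Lie_alg X"
| bracket: "v \<in> Lie_alg X \<Longrightarrow> w \<in> Lie_alg X \<Longrightarrow> vf_bracket X v w \<in> Lie_alg X"

definition algebraic_density_property :: "('n::finite) pt set \<Rightarrow> bool" where
  "algebraic_density_property X \<longleftrightarrow> Lie_alg X = VF X"

definition Aut :: "('n::finite) pt set \<Rightarrow> ('n pt \<Rightarrow> 'n pt) set" where
  "Aut X = {\<phi>. (\<forall>i. (\<lambda>x. \<phi> x i) \<in> poly_fun) \<and> \<phi> ` X \<subseteq> X \<and>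
     (\<exists>\<psi>. (\<forall>i. (\<lambda>x. \<psi> x i) \<in> poly_fun) \<and> \<psi> ` X \<subseteq> X \<and>
          (\<forall>x\<in>X. \<psi> (\<phi> x) = x) \<and> (\<forall>x\<in>X. \<phi> (\<psi> x) = x))}"

definition transitive_Aut :: "('n::finite) pt set \<Rightarrow> bool" where
  "transitive_Aut X \<longleftrightarrow> (\<forall>x\<in>X. \<forall>y\<in>X. \<exists>\<phi>\<in>Aut X. \<phi> x = y)"

definition differential :: "('n::finite pt \<Rightarrow> 'n pt) \<Rightarrow> 'n pt \<Rightarrow> 'n pt \<Rightarrow> 'n pt" where
  "differential \<phi> x0 v = (\<lambda>i. \<Sum>j\<in>UNIV. pd (\<lambda>x. \<phi> x i) j x0 * v j)"

definition cspan :: "('n::finite) pt set \<Rightarrow> 'n pt set" where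
  "cspan A = {v. \<exists>S c. finite S \<and> S \<subseteq> A \<and> v = (\<lambda>j. \<Sum>u\<in>S. c u * u j)}"

definition generating_subset :: "('n::finite) pt set \<Rightarrow> 'n pt \<Rightarrow> 'n pt set \<Rightarrow> bool" where
  "generating_subset X x0 F \<longleftrightarrow> finite F \<and> F \<subseteq> tangent_space X x0 \<and>
     cspan {differential \<phi> x0 v | \<phi> v. \<phi> \<in> Aut X \<and> \<phi> x0 = x0 \<and> v \<in> F} = tangent_space X x0"

definition submodule_VF :: "('n::finite) pt set \<Rightarrow> 'n vfield set \<Rightarrow> bool" where
  "submodule_VF X L \<longleftrightarrow> L \<subseteq> VF X \<and> (\<lambda>i x. 0) \<in> L \<and>
     (\<forall>v\<in>L. \<forall>w\<in>L. (\<lambda>i x. v i x + w i x) \<in> L) \<and>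
     (\<forall>h\<in>reg X. \<forall>v\<in>L. (\<lambda>i x. h x * v i x) \<in> L)"

end

theory Submission
  imports Defs "HOL-Library.Function_Algebras" "HOL-Computational_Algebra.Fundamental_Theorem_Algebra"
begin

text \<open>
  Let \<open>M\<close> be the set of sums of push-forwards \<open>\<phi>\<^sub>* l\<close> with \<open>\<phi> \<in> Aut X\<close>, \<open>l \<in> L\<close>.
  (1) Push-forward by an automorphism preserves algebraic vector fields, completeness and
      brackets, so \<open>Lie_alg(X)\<close> is \<open>Aut X\<close>-invariant and \<open>M \<subseteq> Lie_alg(X) \<subseteq> VF(X)\<close>.
  (2) \<open>M\<close> is a \<open>\<complex>[X]\<close>-module whose fibre at every point \<open>y\<close> is all of \<open>T\<^sub>yX\<close>: transport the
      generating subset from \<open>x\<^sub>0\<close> to \<open>y\<close> by an automorphism.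
  (3) Local generation: for \<open>v \<in> VF(X)\<close> and \<open>y\<^sub>0 \<in> X\<close> there is a polynomial \<open>d\<close> with
      \<open>d(y\<^sub>0) \<noteq> 0\<close> and \<open>d \<cdot> v \<in> M\<close>; this is Cramer's rule, using that all tangent spaces have
      the same dimension.
  (4) By the weak Nullstellensatz (proved here via maximal ideals and the countable dimension
      of the polynomial ring) such \<open>d\<close>'s admit a partition of unity \<open>\<Sum> a\<^sub>d d = 1\<close> on \<open>X\<close>, hence
      \<open>v = \<Sum> a\<^sub>d (d \<cdot> v) \<in> M\<close>.
\<close>

section \<open>Polynomial functions and their partial derivatives\<close>

lemma poly_fun_neg: "p \<in> poly_fun \<Longrightarrow> (\<lambda>x. - p x) \<in> poly_fun"
  using poly_fun.mult[OF poly_fun.const[of "-1"]] by simp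

lemma poly_fun_diff: "p \<in> poly_fun \<Longrightarrow> q \<in> poly_fun \<Longrightarrow> (\<lambda>x. p x - q x) \<in> poly_fun"
  using poly_fun.add[OF _ poly_fun_neg] by simp

lemma poly_fun_smult: "p \<in> poly_fun \<Longrightarrow> (\<lambda>x. c * p x) \<in> poly_fun"
  by (rule poly_fun.mult[OF poly_fun.const])

lemma poly_fun_sum:
  "finite S \<Longrightarrow> (\<And>s. s \<in> S \<Longrightarrow> f s \<in> poly_fun) \<Longrightarrow> (\<lambda>x. \<Sum>s\<in>S. f s x) \<in> poly_fun"
  by (induction S rule: finite_induct) (auto intro: poly_fun.const poly_fun.add)

lemma poly_fun_prod:
  "finite S \<Longrightarrow> (\<And>s. s \<in> S \<Longrightarrow> f s \<in> poly_fun) \<Longrightarrow> (\<lambda>x. \<Prod>s\<in>S. f s x) \<in> poly_fun"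
  by (induction S rule: finite_induct) (auto intro: poly_fun.const poly_fun.mult)

lemma poly_fun_comp:
  assumes "p \<in> poly_fun" "\<And>i. (\<lambda>x. \<Phi> x i) \<in> poly_fun"
  shows "(\<lambda>x. p (\<Phi> x)) \<in> poly_fun"
  using assms(1) by induction (auto intro: poly_fun.intros assms(2))

lemma poly_fun_univariate: "(\<lambda>x. poly q (x i)) \<in> poly_fun"
proof -
  have "(\<lambda>t. poly q t) \<circ> (\<lambda>x. x i) \<in> poly_fun"
    by (induction q) (auto simp: o_def intro!: poly_fun.intros)
  then show ?thesis by (simp add: o_def)
qed

lemma coordinate_line_deriv:
  "((\<lambda>s. (x(j:=s)) k) has_field_derivative (if k = j then 1 else 0)) (at t)"
  by (cases "k = j") (auto intro!: derivative_eq_intros)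

lemma sum_delta:
  fixes a :: "'n::finite \<Rightarrow> complex"
  shows "(\<Sum>k\<in>UNIV. a k * (if k = j then (1::complex) else 0)) = a j"
  by (simp add: if_distrib cong: if_cong)

lemma line_deriv_from_chain_rule:
  fixes p :: "('n::finite) fn"
  assumes "\<And>\<gamma> \<gamma>' t. (\<forall>j. ((\<lambda>s. \<gamma> s j) has_field_derivative \<gamma>' j) (at t)) \<Longrightarrow>
     ((\<lambda>s. p (\<gamma> s)) has_field_derivative (\<Sum>j\<in>UNIV. pd p j (\<gamma> t) * \<gamma>' j)) (at t)"
  shows "((\<lambda>s. p (x(j:=s))) has_field_derivative pd p j x) (at (x j))"
proof -
  have "((\<lambda>s. p (x(j:=s))) has_field_derivative
     (\<Sum>k\<in>UNIV. pd p k (x(j:=x j)) * (if k = j then 1 else 0))) (at (x j))"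
    by (rule assms) (use coordinate_line_deriv[of x j] in blast)
  then show ?thesis by (simp only: sum_delta fun_upd_triv)
qed

text \<open>Chain rule: a polynomial composed with a differentiable curve, proved by induction
  on the polynomial (the inductive hypothesis is needed along coordinate lines as well).\<close>
lemma poly_fun_chain_rule_all:
  fixes p :: "('n::finite) fn"
  assumes "p \<in> poly_fun"
  shows "\<And>\<gamma> \<gamma>' t. (\<forall>j. ((\<lambda>s. \<gamma> s j) has_field_derivative \<gamma>' j) (at t)) \<Longrightarrow>
     ((\<lambda>s. p (\<gamma> s)) has_field_derivative (\<Sum>j\<in>UNIV. pd p j (\<gamma> t) * \<gamma>' j)) (at t)"
  using assms
proof induction
  case (const c)
  then show ?case by (simp add: pd_def)
next
  case (coord i)
  have "pd (\<lambda>x. x i) j y = (if j = i then 1 else 0)" for j y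
    unfolding pd_def by (cases "i = j") auto
  then have "(\<Sum>j\<in>UNIV. pd (\<lambda>x. x i) j (\<gamma> t) * \<gamma>' j) = \<gamma>' i"
    using sum_delta[of \<gamma>' i] by (simp add: mult.commute)
  then show ?case using coord by simp
next
  case (add p q)
  have "pd (\<lambda>x. p x + q x) j x = pd p j x + pd q j x" for j x
    unfolding pd_def[of "\<lambda>x. p x + q x"]
    by (intro DERIV_imp_deriv DERIV_add line_deriv_from_chain_rule add.IH)
  then show ?case using DERIV_add[OF add.IH(1)[OF add.prems] add.IH(2)[OF add.prems]]
    by (simp add: distrib_right sum.distrib)
next
  case (mult p q)
  have lp: "((\<lambda>s. p (x(j:=s))) has_field_derivative pd p j x) (at (x j))" for x j
    by (rule line_deriv_from_chain_rule) (rule mult.IH(1))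
  have lq: "((\<lambda>s. q (x(j:=s))) has_field_derivative pd q j x) (at (x j))" for x j
    by (rule line_deriv_from_chain_rule) (rule mult.IH(2))
  have "pd (\<lambda>x. p x * q x) j x = pd p j x * q x + p x * pd q j x" for j x
    unfolding pd_def[of "\<lambda>x. p x * q x"]
    by (rule DERIV_imp_deriv) (use DERIV_mult[OF lp[of x j] lq[of x j]] in \<open>simp add: mult.commute\<close>)
  then show ?case using DERIV_mult[OF mult.IH(1)[OF mult.prems] mult.IH(2)[OF mult.prems]]
    by (simp add: algebra_simps sum.distrib sum_distrib_left)
qed

lemma poly_fun_chain_rule:
  fixes p :: "('n::finite) fn"
  assumes "p \<in> poly_fun" "\<And>j. ((\<lambda>s. \<gamma> s j) has_field_derivative \<gamma>' j) (at t)"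
  shows "((\<lambda>s. p (\<gamma> s)) has_field_derivative (\<Sum>j\<in>UNIV. pd p j (\<gamma> t) * \<gamma>' j)) (at t)"
  using poly_fun_chain_rule_all[OF assms(1)] assms(2) by blast

lemma poly_fun_line_deriv:
  fixes p :: "('n::finite) fn"
  assumes "p \<in> poly_fun"
  shows "((\<lambda>s. p (x(j:=s))) has_field_derivative pd p j x) (at (x j))"
  by (rule line_deriv_from_chain_rule) (rule poly_fun_chain_rule_all[OF assms])

lemma pd_const[simp]: "pd (\<lambda>x. c) j = (\<lambda>x. 0)"
  by (rule ext) (simp add: pd_def)

lemma pd_coord: "pd (\<lambda>x. x i) j = (\<lambda>x. if i = j then 1 else 0)"
  by (rule ext) (cases "i = j"; simp add: pd_def)

lemma pd_add:
  "p \<in> poly_fun \<Longrightarrow> q \<in> poly_fun \<Longrightarrow> pd (\<lambda>x. p x + q x) j = (\<lambda>x. pd p j x + pd q j x)"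
  by (rule ext, unfold pd_def[of "\<lambda>x. p x + q x"], rule DERIV_imp_deriv,
      rule DERIV_add[OF poly_fun_line_deriv poly_fun_line_deriv]) auto

lemma pd_mult:
  assumes "p \<in> poly_fun" "q \<in> poly_fun"
  shows "pd (\<lambda>x. p x * q x) j = (\<lambda>x. pd p j x * q x + p x * pd q j x)"
proof (rule ext)
  fix x
  show "pd (\<lambda>x. p x * q x) j x = pd p j x * q x + p x * pd q j x"
    unfolding pd_def[of "\<lambda>x. p x * q x"]
    by (rule DERIV_imp_deriv)
       (use DERIV_mult[OF poly_fun_line_deriv[OF assms(1), of x j]
          poly_fun_line_deriv[OF assms(2), of x j]] in \<open>simp add: mult.commute\<close>)
qed

lemma pd_diff:
  "p \<in> poly_fun \<Longrightarrow> q \<in> poly_fun \<Longrightarrow> pd (\<lambda>x. p x - q x) j = (\<lambda>x. pd p j x - pd q j x)"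
  using pd_add[of p "\<lambda>x. - q x" j] pd_mult[of "\<lambda>x. -1" q j] poly_fun_neg[of q]
  by (simp add: poly_fun.const)

lemma pd_sum:
  "finite S \<Longrightarrow> (\<And>s. s \<in> S \<Longrightarrow> f s \<in> poly_fun) \<Longrightarrow>
   pd (\<lambda>x. \<Sum>s\<in>S. f s x) j = (\<lambda>x. \<Sum>s\<in>S. pd (f s) j x)"
proof (induction S rule: finite_induct)
  case (insert a S)
  then have "pd (\<lambda>x. f a x + (\<Sum>s\<in>S. f s x)) j = (\<lambda>x. pd (f a) j x + pd (\<lambda>x. \<Sum>s\<in>S. f s x) j x)"
    by (intro pd_add) (auto intro: poly_fun_sum)
  with insert show ?case by simp
qed simp

lemma pd_poly: "p \<in> poly_fun \<Longrightarrow> pd p j \<in> poly_fun"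
  by (induction rule: poly_fun.induct)
     (simp_all add: pd_coord pd_add pd_mult poly_fun.intros)

lemma pd_comp:
  fixes \<Phi> :: "('n::finite) pt \<Rightarrow> ('m::finite) pt"
  assumes "p \<in> poly_fun" "\<And>i. (\<lambda>x. \<Phi> x i) \<in> poly_fun"
  shows "pd (\<lambda>x. p (\<Phi> x)) j x = (\<Sum>k\<in>UNIV. pd p k (\<Phi> x) * pd (\<lambda>x. \<Phi> x k) j x)"
proof -
  have "((\<lambda>s. p (\<Phi> (x(j:=s)))) has_field_derivative
      (\<Sum>k\<in>UNIV. pd p k (\<Phi> (x(j:=x j))) * pd (\<lambda>x. \<Phi> x k) j x)) (at (x j))"
    by (rule poly_fun_chain_rule[OF assms(1)]) (rule poly_fun_line_deriv[OF assms(2)])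
  then show ?thesis unfolding pd_def[of "\<lambda>x. p (\<Phi> x)"] by (simp add: DERIV_imp_deriv)
qed

lemma pd_pd_sym: "p \<in> poly_fun \<Longrightarrow> pd (pd p i) j = pd (pd p j) i"
  by (induction rule: poly_fun.induct)
     (simp_all add: pd_coord pd_add pd_mult pd_poly poly_fun.mult algebra_simps)

lemma hessian_contraction_sym:
  assumes "p \<in> poly_fun"
  shows "(\<Sum>k\<in>UNIV. \<Sum>j\<in>UNIV. a k * b j * pd (pd p j) k x) =
         (\<Sum>k\<in>UNIV. \<Sum>j\<in>UNIV. b k * a j * pd (pd p j) k x)"
proof -
  have "(\<Sum>k\<in>UNIV. \<Sum>j\<in>UNIV. a k * b j * pd (pd p j) k x) =
        (\<Sum>j\<in>UNIV. \<Sum>k\<in>UNIV. a k * b j * pd (pd p j) k x)"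
    by (rule sum.swap)
  also have "\<dots> = (\<Sum>j\<in>UNIV. \<Sum>k\<in>UNIV. b j * a k * pd (pd p k) j x)"
    using pd_pd_sym[OF assms] by (intro sum.cong refl) (simp add: mult.commute)
  finally show ?thesis .
qed

section \<open>Regular functions and algebraic vector fields\<close>

lemma van_idealI: "f \<in> poly_fun \<Longrightarrow> (\<And>x. x \<in> X \<Longrightarrow> f x = 0) \<Longrightarrow> f \<in> van_ideal X"
  by (simp add: van_ideal_def)

lemma van_ideal_poly: "f \<in> van_ideal X \<Longrightarrow> f \<in> poly_fun"
  by (simp add: van_ideal_def)

lemma regI: "p \<in> poly_fun \<Longrightarrow> (\<lambda>x. if x \<in> X then p x else 0) \<in> reg X"
  by (auto simp: reg_def)

lemma regE:
  assumes "g \<in> reg X"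
  obtains p where "p \<in> poly_fun" "g = (\<lambda>x. if x \<in> X then p x else 0)"
  using assms by (auto simp: reg_def)

lemma reg_out: "g \<in> reg X \<Longrightarrow> x \<notin> X \<Longrightarrow> g x = 0"
  by (auto simp: reg_def)

lemma reg_const: "(\<lambda>x. if x \<in> X then c else 0) \<in> reg X"
  by (rule regI[OF poly_fun.const])

lemma reg_op2:
  fixes X :: "('n::finite) pt set"
  assumes g: "g \<in> reg X" and h: "h \<in> reg X"
    and F: "\<And>p q :: 'n fn. p \<in> poly_fun \<Longrightarrow> q \<in> poly_fun \<Longrightarrow> (\<lambda>x. F (p x) (q x)) \<in> poly_fun"
    and F0: "F 0 0 = 0"
  shows "(\<lambda>x. F (g x) (h x)) \<in> reg X"
proof -
  obtain p where p: "p \<in> poly_fun" "g = (\<lambda>x. if x \<in> X then p x else 0)" using g by (rule regE)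
  obtain q where q: "q \<in> poly_fun" "h = (\<lambda>x. if x \<in> X then q x else 0)" using h by (rule regE)
  have "(\<lambda>x. F (g x) (h x)) = (\<lambda>x. if x \<in> X then F (p x) (q x) else 0)"
    using F0 by (auto simp: p q)
  then show ?thesis using regI[OF F[OF p(1) q(1)]] by simp
qed

lemma reg_add: "g \<in> reg X \<Longrightarrow> h \<in> reg X \<Longrightarrow> (\<lambda>x. g x + h x) \<in> reg X"
  by (rule reg_op2[where F="(+)"]) (auto intro: poly_fun.add)

lemma reg_diff: "g \<in> reg X \<Longrightarrow> h \<in> reg X \<Longrightarrow> (\<lambda>x. g x - h x) \<in> reg X"
  by (rule reg_op2[where F="(-)"]) (auto intro: poly_fun_diff)

lemma reg_smult: "g \<in> reg X \<Longrightarrow> (\<lambda>x. c * g x) \<in> reg X"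
  by (rule reg_op2[where F="\<lambda>a b. c * a" and h=g]) (auto intro: poly_fun_smult)

lemma VF_reg: "v \<in> VF X \<Longrightarrow> v i \<in> reg X"
  by (simp add: VF_def)

lemma VF_out: "v \<in> VF X \<Longrightarrow> x \<notin> X \<Longrightarrow> v i x = 0"
  by (rule reg_out[OF VF_reg])

lemma VF_tan:
  "v \<in> VF X \<Longrightarrow> f \<in> van_ideal X \<Longrightarrow> x \<in> X \<Longrightarrow> (\<Sum>j\<in>UNIV. v j x * pd f j x) = 0"
  by (simp add: VF_def)

lemma VF_tangent: "v \<in> VF X \<Longrightarrow> y \<in> X \<Longrightarrow> (\<lambda>j. v j y) \<in> tangent_space X y"
  by (auto simp: tangent_space_def mult.commute dest: VF_tan)

lemma VF_rep:
  assumes "v \<in> VF X"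
  obtains P where "\<And>i. P i \<in> poly_fun" "\<And>i x. x \<in> X \<Longrightarrow> v i x = P i x"
proof -
  have "\<forall>i. \<exists>p. p \<in> poly_fun \<and> (\<forall>x\<in>X. v i x = p x)"
    using assms by (metis (no_types, lifting) VF_reg regE)
  then show ?thesis using that by metis
qed

lemma VF_zero: "(\<lambda>i x. 0) \<in> VF X"
  using regI[OF poly_fun.const[of 0], of X] by (simp add: VF_def)

lemma VF_add: "v \<in> VF X \<Longrightarrow> w \<in> VF X \<Longrightarrow> (\<lambda>i x. v i x + w i x) \<in> VF X"
  by (auto simp: VF_def reg_add distrib_right sum.distrib)

lemma VF_smult: "v \<in> VF X \<Longrightarrow> (\<lambda>i x. c * v i x) \<in> VF X"
  by (auto simp: VF_def reg_smult mult.assoc sum_distrib_left[symmetric])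

text \<open>The derivative of a regular function along a vector field does not depend on the
  chosen polynomial representative, because the difference of two representatives
  vanishes on \<open>X\<close>.\<close>
lemma derivation_rep_indep:
  assumes v: "v \<in> VF X" and p: "p \<in> poly_fun" and q: "q \<in> poly_fun"
    and eq: "\<And>x. x \<in> X \<Longrightarrow> p x = q x" and y: "y \<in> X"
  shows "(\<Sum>j\<in>UNIV. v j y * pd p j y) = (\<Sum>j\<in>UNIV. v j y * pd q j y)"
proof -
  have "(\<lambda>x. p x - q x) \<in> van_ideal X" using eq by (auto intro!: van_idealI poly_fun_diff p q)
  from VF_tan[OF v this y] show ?thesis
    by (simp add: pd_diff[OF p q] right_diff_distrib sum_subtractf)
qed

lemma vf_apply_eq:
  assumes v: "v \<in> VF X" and p: "p \<in> poly_fun" and eq: "\<And>x. x \<in> X \<Longrightarrow> g x = p x"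
  shows "vf_apply X v g y = (if y \<in> X then (\<Sum>j\<in>UNIV. v j y * pd p j y) else 0)"
proof -
  define q where "q = (SOME p. p \<in> poly_fun \<and> (\<forall>x\<in>X. g x = p x))"
  have "q \<in> poly_fun \<and> (\<forall>x\<in>X. g x = q x)" unfolding q_def
    by (rule someI_ex[of "\<lambda>p. p \<in> poly_fun \<and> (\<forall>x\<in>X. g x = p x)"]) (use p eq in blast)
  then show ?thesis
    unfolding vf_apply_def Let_def q_def[symmetric]
    using derivation_rep_indep[OF v _ p] eq by auto
qed

lemma vf_apply_reg:
  assumes v: "v \<in> VF X" and g: "g \<in> reg X"
  shows "vf_apply X v g \<in> reg X"
proof -
  obtain p where p: "p \<in> poly_fun" "g = (\<lambda>x. if x \<in> X then p x else 0)" using g by (rule regE)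
  obtain P where P: "\<And>i. P i \<in> poly_fun" "\<And>i x. x \<in> X \<Longrightarrow> v i x = P i x"
    using VF_rep[OF v] by blast
  have "vf_apply X v g = (\<lambda>y. if y \<in> X then (\<Sum>j\<in>UNIV. P j y * pd p j y) else 0)"
    by (rule ext, subst vf_apply_eq[OF v p(1)]) (auto simp: p(2) P(2))
  then show ?thesis by (auto intro!: regI poly_fun_sum poly_fun.mult P pd_poly p)
qed

text \<open>Differentiating the tangency identity \<open>w(f) = 0\<close> along \<open>v\<close>: for \<open>f\<close> vanishing on \<open>X\<close>
  the function \<open>\<Sum>\<^sub>i W\<^sub>i \<partial>\<^sub>if\<close> vanishes on \<open>X\<close> too, so \<open>v\<close> annihilates its differential.\<close>
lemma tangency_derivative:
  assumes v: "v \<in> VF X" and w: "w \<in> VF X"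
    and W: "\<And>i. W i \<in> poly_fun" "\<And>i x. x \<in> X \<Longrightarrow> w i x = W i x"
    and f: "f \<in> van_ideal X" and x: "x \<in> X"
  shows "(\<Sum>k\<in>UNIV. \<Sum>i\<in>UNIV. v k x * pd (W i) k x * pd f i x) +
         (\<Sum>k\<in>UNIV. \<Sum>i\<in>UNIV. v k x * W i x * pd (pd f i) k x) = 0"
proof -
  have fp: "f \<in> poly_fun" using f by (rule van_ideal_poly)
  define g where "g = (\<lambda>y. \<Sum>i\<in>UNIV. W i y * pd f i y)"
  have "g \<in> van_ideal X"
    unfolding g_def using VF_tan[OF w f] W(2)
    by (intro van_idealI poly_fun_sum poly_fun.mult W(1) pd_poly fp) auto
  moreover have "pd g k = (\<lambda>y. \<Sum>i\<in>UNIV. pd (W i) k y * pd f i y + W i y * pd (pd f i) k y)" for k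
    unfolding g_def
    by (subst pd_sum) (auto intro!: poly_fun.mult W(1) pd_poly fp simp: pd_mult W(1) pd_poly fp)
  ultimately show ?thesis
    using VF_tan[OF v _ x, of g]
    by (simp add: sum_distrib_left distrib_left sum.distrib mult.assoc)
qed

text \<open>The bracket of two vector fields is again a vector field; tangency follows from
  \<open>tangency_derivative\<close> applied twice, the second-order terms cancelling by Schwarz.\<close>
lemma bracket_VF:
  assumes v: "v \<in> VF X" and w: "w \<in> VF X"
  shows "vf_bracket X v w \<in> VF X"
proof -
  obtain V where V: "\<And>i. V i \<in> poly_fun" "\<And>i x. x \<in> X \<Longrightarrow> v i x = V i x"
    using VF_rep[OF v] by blast
  obtain W where W: "\<And>i. W i \<in> poly_fun" "\<And>i x. x \<in> X \<Longrightarrow> w i x = W i x"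
    using VF_rep[OF w] by blast
  have tan: "(\<Sum>j\<in>UNIV. vf_bracket X v w j x * pd f j x) = 0"
    if f: "f \<in> van_ideal X" and x: "x \<in> X" for f x
  proof -
    have fp: "f \<in> poly_fun" using f by (rule van_ideal_poly)
    have ap: "vf_apply X v (w i) x = (\<Sum>k\<in>UNIV. v k x * pd (W i) k x)"
      "vf_apply X w (v i) x = (\<Sum>k\<in>UNIV. w k x * pd (V i) k x)" for i
      using vf_apply_eq[OF v W(1), of "w i"] vf_apply_eq[OF w V(1), of "v i"] W(2) V(2) x by auto
    have hess: "(\<Sum>k\<in>UNIV. \<Sum>i\<in>UNIV. v k x * W i x * pd (pd f i) k x) =
                (\<Sum>k\<in>UNIV. \<Sum>i\<in>UNIV. w k x * V i x * pd (pd f i) k x)"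
      using hessian_contraction_sym[OF fp, of "\<lambda>k. v k x" "\<lambda>i. W i x" x] V(2)[OF x] W(2)[OF x]
      by simp
    have swap: "(\<Sum>j\<in>UNIV. (\<Sum>k\<in>UNIV. u k x * pd (U j) k x) * pd f j x) =
                (\<Sum>k\<in>UNIV. \<Sum>i\<in>UNIV. u k x * pd (U i) k x * pd f i x)" for u :: "'a vfield" and U
      by (simp add: sum_distrib_right) (rule sum.swap)
    have "(\<Sum>j\<in>UNIV. vf_bracket X v w j x * pd f j x) =
       (\<Sum>j\<in>UNIV. (\<Sum>k\<in>UNIV. v k x * pd (W j) k x) * pd f j x) -
       (\<Sum>j\<in>UNIV. (\<Sum>k\<in>UNIV. w k x * pd (V j) k x) * pd f j x)"
      by (simp add: vf_bracket_def ap left_diff_distrib sum_subtractf)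
    then show ?thesis
      using tangency_derivative[OF v w W f x] tangency_derivative[OF w v V f x] hess swap
      by (simp add: eq_neg_iff_add_eq_0[symmetric])
  qed
  have "vf_bracket X v w i \<in> reg X" for i
    unfolding vf_bracket_def by (intro reg_diff vf_apply_reg v w VF_reg)
  with tan show ?thesis by (simp add: VF_def)
qed

lemma Lie_VF: "v \<in> Lie_alg X \<Longrightarrow> v \<in> VF X"
  by (induction rule: Lie_alg.induct)
     (auto simp: complete_vf_def VF_zero VF_add VF_smult bracket_VF)

section \<open>Automorphisms act on \<open>Lie_alg(X)\<close>\<close>

definition inv_aut :: "('n::finite) pt set \<Rightarrow> ('n pt \<Rightarrow> 'n pt) \<Rightarrow> ('n pt \<Rightarrow> 'n pt)" where
  "inv_aut X \<phi> = (SOME \<psi>. (\<forall>i. (\<lambda>x. \<psi> x i) \<in> poly_fun) \<and> \<psi> ` X \<subseteq> X \<and>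
          (\<forall>x\<in>X. \<psi> (\<phi> x) = x) \<and> (\<forall>x\<in>X. \<phi> (\<psi> x) = x))"

lemma aut_poly: "\<phi> \<in> Aut X \<Longrightarrow> (\<lambda>x. \<phi> x i) \<in> poly_fun"
  by (simp add: Aut_def)

lemma aut_X: "\<phi> \<in> Aut X \<Longrightarrow> x \<in> X \<Longrightarrow> \<phi> x \<in> X"
  by (auto simp: Aut_def)

lemma inv_aut:
  assumes "\<phi> \<in> Aut X"
  shows "\<And>i. (\<lambda>x. inv_aut X \<phi> x i) \<in> poly_fun" "\<And>x. x \<in> X \<Longrightarrow> inv_aut X \<phi> x \<in> X"
    "\<And>x. x \<in> X \<Longrightarrow> inv_aut X \<phi> (\<phi> x) = x" "\<And>x. x \<in> X \<Longrightarrow> \<phi> (inv_aut X \<phi> x) = x"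
proof -
  have "\<exists>\<psi>. (\<forall>i. (\<lambda>x. \<psi> x i) \<in> poly_fun) \<and> \<psi> ` X \<subseteq> X \<and>
          (\<forall>x\<in>X. \<psi> (\<phi> x) = x) \<and> (\<forall>x\<in>X. \<phi> (\<psi> x) = x)"
    using assms by (simp add: Aut_def)
  from someI_ex[OF this, folded inv_aut_def]
  show "\<And>i. (\<lambda>x. inv_aut X \<phi> x i) \<in> poly_fun" "\<And>x. x \<in> X \<Longrightarrow> inv_aut X \<phi> x \<in> X"
    "\<And>x. x \<in> X \<Longrightarrow> inv_aut X \<phi> (\<phi> x) = x" "\<And>x. x \<in> X \<Longrightarrow> \<phi> (inv_aut X \<phi> x) = x"
    by auto
qed

lemma inv_aut_Aut: "\<phi> \<in> Aut X \<Longrightarrow> inv_aut X \<phi> \<in> Aut X"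
  using inv_aut[of \<phi> X] aut_poly[of \<phi> X] aut_X[of \<phi> X]
  unfolding Aut_def[of X] by (intro CollectI conjI exI[of _ \<phi>]) auto

lemma aut_comp:
  assumes "\<phi> \<in> Aut X" "\<theta> \<in> Aut X"
  shows "(\<lambda>x. \<theta> (\<phi> x)) \<in> Aut X"
proof -
  note i1 = inv_aut[OF assms(1)] and i2 = inv_aut[OF assms(2)]
  show ?thesis unfolding Aut_def
  proof (intro CollectI conjI allI exI[of _ "\<lambda>x. inv_aut X \<phi> (inv_aut X \<theta> x)"])
    show "(\<lambda>x. \<theta> (\<phi> x) i) \<in> poly_fun" for i
      by (rule poly_fun_comp[OF aut_poly[OF assms(2)] aut_poly[OF assms(1)]])
    show "(\<lambda>x. inv_aut X \<phi> (inv_aut X \<theta> x) i) \<in> poly_fun" for i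
      by (rule poly_fun_comp[OF i1(1) i2(1)])
  qed (use aut_X[OF assms(1)] aut_X[OF assms(2)] i1 i2 in auto)
qed

lemma van_ideal_comp:
  assumes "\<phi> \<in> Aut X" "f \<in> van_ideal X"
  shows "(\<lambda>x. f (\<phi> x)) \<in> van_ideal X"
  using assms poly_fun_comp[of f \<phi>] aut_poly[of \<phi> X] by (auto simp: van_ideal_def aut_X)

definition jac_entry :: "(('n::finite) pt \<Rightarrow> 'n pt) \<Rightarrow> 'n \<Rightarrow> 'n \<Rightarrow> 'n fn" where
  "jac_entry \<phi> i j = pd (\<lambda>x. \<phi> x i) j"

definition pushforward :: "('n::finite) pt set \<Rightarrow> ('n pt \<Rightarrow> 'n pt) \<Rightarrow> 'n vfield \<Rightarrow> 'n vfield" where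
  "pushforward X \<phi> v = (\<lambda>i y. if y \<in> X
     then (\<Sum>j\<in>UNIV. jac_entry \<phi> i j (inv_aut X \<phi> y) * v j (inv_aut X \<phi> y)) else 0)"

lemma jac_entry_poly: "\<phi> \<in> Aut X \<Longrightarrow> jac_entry \<phi> i j \<in> poly_fun"
  unfolding jac_entry_def by (rule pd_poly[OF aut_poly])

lemma pushforward_at:
  assumes "\<phi> \<in> Aut X" "x \<in> X"
  shows "pushforward X \<phi> v i (\<phi> x) = (\<Sum>j\<in>UNIV. jac_entry \<phi> i j x * v j x)"
  using assms by (simp add: pushforward_def aut_X inv_aut)

lemma pushforward_zero: "pushforward X \<phi> (\<lambda>i x. 0) = (\<lambda>i x. 0)"
  by (simp add: pushforward_def fun_eq_iff)

lemma pushforward_add: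
  "pushforward X \<phi> (\<lambda>i x. v i x + w i x) = (\<lambda>i x. pushforward X \<phi> v i x + pushforward X \<phi> w i x)"
  by (simp add: pushforward_def distrib_left sum.distrib fun_eq_iff)

lemma pushforward_smult:
  "pushforward X \<phi> (\<lambda>i x. c * v i x) = (\<lambda>i x. c * pushforward X \<phi> v i x)"
  by (simp add: pushforward_def sum_distrib_left mult_ac fun_eq_iff)

lemma pushforward_pairing:
  assumes phi: "\<phi> \<in> Aut X" and x: "x \<in> X" and Q: "Q \<in> poly_fun"
  shows "(\<Sum>l\<in>UNIV. pushforward X \<phi> v l (\<phi> x) * pd Q l (\<phi> x)) =
         (\<Sum>k\<in>UNIV. v k x * pd (\<lambda>z. Q (\<phi> z)) k x)"
proof -
  have "(\<Sum>l\<in>UNIV. pushforward X \<phi> v l (\<phi> x) * pd Q l (\<phi> x)) =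
        (\<Sum>l\<in>UNIV. (\<Sum>k\<in>UNIV. jac_entry \<phi> l k x * v k x) * pd Q l (\<phi> x))"
    by (simp add: pushforward_at[OF phi x])
  also have "\<dots> = (\<Sum>k\<in>UNIV. v k x * (\<Sum>l\<in>UNIV. pd Q l (\<phi> x) * jac_entry \<phi> l k x))"
    by (simp add: sum_distrib_right sum_distrib_left mult_ac) (rule sum.swap)
  also have "\<dots> = (\<Sum>k\<in>UNIV. v k x * pd (\<lambda>z. Q (\<phi> z)) k x)"
    by (simp add: pd_comp[OF Q aut_poly[OF phi]] jac_entry_def)
  finally show ?thesis .
qed

lemma pushforward_VF:
  assumes phi: "\<phi> \<in> Aut X" and v: "v \<in> VF X"
  shows "pushforward X \<phi> v \<in> VF X"
proof -
  define \<psi> where "\<psi> = inv_aut X \<phi>"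
  note inv = inv_aut[OF phi, folded \<psi>_def]
  obtain P where P: "\<And>i. P i \<in> poly_fun" "\<And>i x. x \<in> X \<Longrightarrow> v i x = P i x"
    using VF_rep[OF v] by blast
  have "pushforward X \<phi> v i \<in> reg X" for i
  proof -
    have "pushforward X \<phi> v i =
        (\<lambda>y. if y \<in> X then (\<Sum>j\<in>UNIV. jac_entry \<phi> i j (\<psi> y) * P j (\<psi> y)) else 0)"
      by (rule ext) (simp add: pushforward_def \<psi>_def[symmetric] P(2) inv(2))
    moreover have "(\<lambda>y. \<Sum>j\<in>UNIV. jac_entry \<phi> i j (\<psi> y) * P j (\<psi> y)) \<in> poly_fun"
      by (intro poly_fun_sum poly_fun.mult poly_fun_comp[OF jac_entry_poly[OF phi]]
          poly_fun_comp[OF P(1)] inv(1)) auto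
    ultimately show ?thesis by (simp add: regI)
  qed
  moreover have "(\<Sum>i\<in>UNIV. pushforward X \<phi> v i y * pd f i y) = 0"
    if f: "f \<in> van_ideal X" and y: "y \<in> X" for f y
  proof -
    have x: "\<psi> y \<in> X" "\<phi> (\<psi> y) = y" using inv y by auto
    show ?thesis
      using pushforward_pairing[OF phi x(1) van_ideal_poly[OF f], of v]
        VF_tan[OF v van_ideal_comp[OF phi f] x(1)] x(2)
      by simp
  qed
  ultimately show ?thesis by (simp add: VF_def)
qed

text \<open>Automorphisms map integral curves to integral curves, hence preserve completeness.\<close>
lemma pushforward_complete:
  assumes phi: "\<phi> \<in> Aut X" and v: "complete_vf X v"
  shows "complete_vf X (pushforward X \<phi> v)"
proof -
  note inv = inv_aut[OF phi]
  have "\<exists>\<delta>::complex \<Rightarrow> 'a pt. \<delta> 0 = y \<and> (\<forall>t. \<delta> t \<in> X) \<and>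
        (\<forall>t i. ((\<lambda>s. \<delta> s i) has_field_derivative pushforward X \<phi> v i (\<delta> t)) (at t))"
    if y: "y \<in> X" for y
  proof -
    obtain \<gamma> :: "complex \<Rightarrow> 'a pt" where g: "\<gamma> 0 = inv_aut X \<phi> y" "\<And>t. \<gamma> t \<in> X"
      "\<And>t i. ((\<lambda>s. \<gamma> s i) has_field_derivative v i (\<gamma> t)) (at t)"
      using v inv(2)[OF y] unfolding complete_vf_def by blast
    show ?thesis
    proof (intro exI[of _ "\<lambda>t. \<phi> (\<gamma> t)"] conjI allI)
      show "\<phi> (\<gamma> 0) = y" using g(1) inv(4)[OF y] by simp
      show "\<phi> (\<gamma> t) \<in> X" for t using aut_X[OF phi g(2)] .
      show "((\<lambda>s. \<phi> (\<gamma> s) i) has_field_derivative pushforward X \<phi> v i (\<phi> (\<gamma> t))) (at t)" for t i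
        using poly_fun_chain_rule[OF aut_poly[OF phi], of \<gamma> "\<lambda>j. v j (\<gamma> t)" t i] g(3)
        by (simp add: pushforward_at[OF phi g(2)] jac_entry_def)
    qed
  qed
  then show ?thesis using pushforward_VF[OF phi] v by (simp add: complete_vf_def)
qed

lemma pushforward_derivation:
  assumes phi: "\<phi> \<in> Aut X" and v: "v \<in> VF X"
    and W: "\<And>j. W j \<in> poly_fun" "\<And>j x. x \<in> X \<Longrightarrow> w j x = W j x" and x: "x \<in> X"
  shows "vf_apply X (pushforward X \<phi> v) (pushforward X \<phi> w i) (\<phi> x) =
    (\<Sum>k\<in>UNIV. v k x * (\<Sum>j\<in>UNIV. pd (jac_entry \<phi> i j) k x * W j x + jac_entry \<phi> i j x * pd (W j) k x))"
proof -
  define \<psi> where "\<psi> = inv_aut X \<phi>"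
  note inv = inv_aut[OF phi, folded \<psi>_def]
  define Q where "Q = (\<lambda>z. \<Sum>j\<in>UNIV. jac_entry \<phi> i j (\<psi> z) * W j (\<psi> z))"
  define R where "R = (\<lambda>z. \<Sum>j\<in>UNIV. jac_entry \<phi> i j z * W j z)"
  have Qp: "Q \<in> poly_fun" unfolding Q_def
    by (intro poly_fun_sum poly_fun.mult poly_fun_comp[OF jac_entry_poly[OF phi]]
        poly_fun_comp[OF W(1)] inv(1)) auto
  have Rp: "R \<in> poly_fun" unfolding R_def
    by (intro poly_fun_sum poly_fun.mult jac_entry_poly[OF phi] W(1)) auto
  have "pushforward X \<phi> w i z = Q z" if "z \<in> X" for z
    using that by (simp add: pushforward_def Q_def \<psi>_def[symmetric] W(2) inv(2))
  then have "vf_apply X (pushforward X \<phi> v) (pushforward X \<phi> w i) (\<phi> x) =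
      (\<Sum>l\<in>UNIV. pushforward X \<phi> v l (\<phi> x) * pd Q l (\<phi> x))"
    using vf_apply_eq[OF pushforward_VF[OF phi v] Qp] aut_X[OF phi x] by simp
  also have "\<dots> = (\<Sum>k\<in>UNIV. v k x * pd (\<lambda>z. Q (\<phi> z)) k x)"
    by (rule pushforward_pairing[OF phi x Qp])
  also have "\<dots> = (\<Sum>k\<in>UNIV. v k x * pd R k x)"
    by (rule derivation_rep_indep[OF v poly_fun_comp[OF Qp aut_poly[OF phi]] Rp _ x])
       (simp add: Q_def R_def inv(3))
  also have "\<dots> = (\<Sum>k\<in>UNIV. v k x *
      (\<Sum>j\<in>UNIV. pd (jac_entry \<phi> i j) k x * W j x + jac_entry \<phi> i j x * pd (W j) k x))"
    unfolding R_def
    by (subst pd_sum) (auto simp: pd_mult jac_entry_poly[OF phi] W(1)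
        intro: poly_fun.mult jac_entry_poly[OF phi] W(1))
  finally show ?thesis .
qed

text \<open>Push-forward is a Lie algebra homomorphism: in \<open>[\<phi>\<^sub>*v, \<phi>\<^sub>*w]\<close> the terms involving
  second derivatives of \<open>\<phi>\<close> cancel by Schwarz's theorem.\<close>
lemma pushforward_bracket:
  assumes phi: "\<phi> \<in> Aut X" and v: "v \<in> VF X" and w: "w \<in> VF X"
  shows "pushforward X \<phi> (vf_bracket X v w) =
         vf_bracket X (pushforward X \<phi> v) (pushforward X \<phi> w)"
proof (intro ext)
  fix i y
  obtain V where V: "\<And>i. V i \<in> poly_fun" "\<And>i x. x \<in> X \<Longrightarrow> v i x = V i x"
    using VF_rep[OF v] by blast
  obtain W where W: "\<And>i. W i \<in> poly_fun" "\<And>i x. x \<in> X \<Longrightarrow> w i x = W i x"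
    using VF_rep[OF w] by blast
  show "pushforward X \<phi> (vf_bracket X v w) i y =
        vf_bracket X (pushforward X \<phi> v) (pushforward X \<phi> w) i y"
  proof (cases "y \<in> X")
    case False
    then show ?thesis by (simp add: pushforward_def vf_bracket_def vf_apply_def Let_def)
  next
    case True
    define x where "x = inv_aut X \<phi> y"
    have x: "x \<in> X" "y = \<phi> x" using inv_aut[OF phi] True by (auto simp: x_def)
    have ap: "vf_apply X v (w j) x = (\<Sum>k\<in>UNIV. v k x * pd (W j) k x)"
      "vf_apply X w (v j) x = (\<Sum>k\<in>UNIV. w k x * pd (V j) k x)" for j
      using vf_apply_eq[OF v W(1), of "w j"] vf_apply_eq[OF w V(1), of "v j"] W(2) V(2) x by auto
    have hess: "(\<Sum>k\<in>UNIV. \<Sum>j\<in>UNIV. v k x * (pd (jac_entry \<phi> i j) k x * W j x)) =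
               (\<Sum>k\<in>UNIV. \<Sum>j\<in>UNIV. w k x * (pd (jac_entry \<phi> i j) k x * V j x))"
      using hessian_contraction_sym[OF aut_poly[OF phi, of i], of "\<lambda>k. v k x" "\<lambda>j. W j x" x]
        V(2)[OF x(1)] W(2)[OF x(1)]
      by (simp add: jac_entry_def mult_ac)
    have "vf_bracket X (pushforward X \<phi> v) (pushforward X \<phi> w) i y =
       (\<Sum>k\<in>UNIV. v k x * (\<Sum>j\<in>UNIV. pd (jac_entry \<phi> i j) k x * W j x + jac_entry \<phi> i j x * pd (W j) k x)) -
       (\<Sum>k\<in>UNIV. w k x * (\<Sum>j\<in>UNIV. pd (jac_entry \<phi> i j) k x * V j x + jac_entry \<phi> i j x * pd (V j) k x))"
      unfolding vf_bracket_def x(2)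
      by (simp add: pushforward_derivation[OF phi v W x(1)] pushforward_derivation[OF phi w V x(1)])
    also have "\<dots> = (\<Sum>k\<in>UNIV. \<Sum>j\<in>UNIV. v k x * (jac_entry \<phi> i j x * pd (W j) k x)) -
       (\<Sum>k\<in>UNIV. \<Sum>j\<in>UNIV. w k x * (jac_entry \<phi> i j x * pd (V j) k x))"
      using hess by (simp add: distrib_left sum.distrib sum_distrib_left)
    also have "\<dots> = (\<Sum>j\<in>UNIV. \<Sum>k\<in>UNIV. jac_entry \<phi> i j x * (v k x * pd (W j) k x)) -
       (\<Sum>j\<in>UNIV. \<Sum>k\<in>UNIV. jac_entry \<phi> i j x * (w k x * pd (V j) k x))"
      by (subst (1 2) sum.swap) (simp add: mult_ac)
    also have "\<dots> = pushforward X \<phi> (vf_bracket X v w) i y"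
      unfolding x(2) pushforward_at[OF phi x(1)]
      by (simp add: vf_bracket_def ap right_diff_distrib sum_subtractf sum_distrib_left)
    finally show ?thesis by simp
  qed
qed

lemma pushforward_Lie:
  assumes "v \<in> Lie_alg X" "\<phi> \<in> Aut X"
  shows "pushforward X \<phi> v \<in> Lie_alg X"
  using assms(1)
proof (induction rule: Lie_alg.induct)
  case (gen v) then show ?case by (intro Lie_alg.gen pushforward_complete assms(2))
next
  case zero then show ?case by (simp add: pushforward_zero Lie_alg.zero)
next
  case (add v w) then show ?case by (simp add: pushforward_add Lie_alg.add)
next
  case (smult v c) then show ?case by (simp add: pushforward_smult Lie_alg.smult)
next
  case (bracket v w) then show ?case
    by (simp add: pushforward_bracket[OF assms(2) Lie_VF Lie_VF] Lie_alg.bracket)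
qed

section \<open>The module generated by the translates of \<open>L\<close>\<close>

inductive_set translate_module :: "('n::finite) pt set \<Rightarrow> 'n vfield set \<Rightarrow> 'n vfield set"
  for X L where
  zero: "(\<lambda>i x. 0) \<in> translate_module X L"
| gen: "\<phi> \<in> Aut X \<Longrightarrow> l \<in> L \<Longrightarrow> pushforward X \<phi> l \<in> translate_module X L"
| add: "v \<in> translate_module X L \<Longrightarrow> w \<in> translate_module X L \<Longrightarrow>
        (\<lambda>i x. v i x + w i x) \<in> translate_module X L"

lemma translate_module_Lie:
  assumes "L \<subseteq> Lie_alg X" "v \<in> translate_module X L"
  shows "v \<in> Lie_alg X"
  using assms(2) by induction (use assms(1) in \<open>auto intro: Lie_alg.zero Lie_alg.add pushforward_Lie\<close>)

lemma translate_module_VF: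
  assumes "submodule_VF X L" "v \<in> translate_module X L"
  shows "v \<in> VF X"
  using assms(2) by induction
    (use assms(1) in \<open>auto simp: submodule_VF_def intro: VF_zero VF_add pushforward_VF\<close>)

lemma translate_module_sum:
  "finite S \<Longrightarrow> (\<And>s. s \<in> S \<Longrightarrow> f s \<in> translate_module X L) \<Longrightarrow>
   (\<lambda>i x. \<Sum>s\<in>S. f s i x) \<in> translate_module X L"
proof (induction S rule: finite_induct)
  case empty then show ?case by (simp add: translate_module.zero)
next
  case (insert a S) then show ?case
    using translate_module.add[of "f a" X L "\<lambda>i x. \<Sum>s\<in>S. f s i x"] by simp
qed

lemma reg_comp_aut:
  assumes phi: "\<phi> \<in> Aut X" and h: "h \<in> reg X"
  shows "(\<lambda>x. if x \<in> X then h (\<phi> x) else 0) \<in> reg X"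
proof -
  obtain p where p: "p \<in> poly_fun" "h = (\<lambda>x. if x \<in> X then p x else 0)" using h by (rule regE)
  have "(\<lambda>x. if x \<in> X then h (\<phi> x) else 0) = (\<lambda>x. if x \<in> X then p (\<phi> x) else 0)"
    using aut_X[OF phi] by (auto simp: p(2))
  then show ?thesis using regI[OF poly_fun_comp[OF p(1) aut_poly[OF phi]]] by simp
qed

text \<open>Module property: \<open>h \<cdot> \<phi>\<^sub>* l = \<phi>\<^sub>* ((h \<circ> \<phi>) \<cdot> l)\<close>, and \<open>(h \<circ> \<phi>) \<cdot> l \<in> L\<close>.\<close>
lemma translate_module_rmult:
  assumes L: "submodule_VF X L" and h: "h \<in> reg X" and v: "v \<in> translate_module X L"
  shows "(\<lambda>i x. h x * v i x) \<in> translate_module X L"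
  using v
proof induction
  case zero then show ?case by (simp add: translate_module.zero)
next
  case (gen \<phi> l)
  define h' where "h' = (\<lambda>x. if x \<in> X then h (\<phi> x) else 0)"
  have "h' \<in> reg X" unfolding h'_def by (rule reg_comp_aut[OF gen(1) h])
  then have l': "(\<lambda>i x. h' x * l i x) \<in> L" using L gen(2) by (simp add: submodule_VF_def)
  have "(\<lambda>i x. h x * pushforward X \<phi> l i x) = pushforward X \<phi> (\<lambda>i x. h' x * l i x)"
    using inv_aut[OF gen(1)] reg_out[OF h]
    by (intro ext) (auto simp: pushforward_def h'_def sum_distrib_left mult_ac)
  then show ?case using translate_module.gen[OF gen(1) l'] by simp
next
  case (add v w) then show ?case using translate_module.add[OF add.IH] by (simp add: distrib_left)
qed


section \<open>Differentials and the fibres of the translate module\<close>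

lemma differential_lincomb:
  "differential \<phi> x (\<lambda>j. \<Sum>s\<in>S. c s * u s j) = (\<lambda>i. \<Sum>s\<in>S. c s * differential \<phi> x (u s) i)"
  unfolding differential_def
  by (rule ext) (simp add: sum_distrib_left sum_distrib_right mult_ac sum.swap[of _ S])

lemma differential_comp:
  assumes "\<phi> \<in> Aut X" "\<theta> \<in> Aut X"
  shows "differential (\<lambda>x. \<theta> (\<phi> x)) x u = differential \<theta> (\<phi> x) (differential \<phi> x u)"
proof (rule ext)
  fix i
  have "differential (\<lambda>x. \<theta> (\<phi> x)) x u i =
     (\<Sum>j\<in>UNIV. (\<Sum>k\<in>UNIV. pd (\<lambda>x. \<theta> x i) k (\<phi> x) * pd (\<lambda>x. \<phi> x k) j x) * u j)"
    unfolding differential_def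
    by (simp add: pd_comp[OF aut_poly[OF assms(2)] aut_poly[OF assms(1)]])
  also have "\<dots> = differential \<theta> (\<phi> x) (differential \<phi> x u) i"
    unfolding differential_def
    by (simp add: sum_distrib_left sum_distrib_right mult_ac) (rule sum.swap)
  finally show "differential (\<lambda>x. \<theta> (\<phi> x)) x u i = differential \<theta> (\<phi> x) (differential \<phi> x u) i" .
qed

lemma differential_tangent:
  assumes phi: "\<phi> \<in> Aut X" and u: "u \<in> tangent_space X x"
  shows "differential \<phi> x u \<in> tangent_space X (\<phi> x)"
proof -
  have "(\<Sum>j\<in>UNIV. pd f j (\<phi> x) * differential \<phi> x u j) = 0" if f: "f \<in> van_ideal X" for f
  proof -
    have "(\<Sum>j\<in>UNIV. pd f j (\<phi> x) * differential \<phi> x u j) =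
          (\<Sum>k\<in>UNIV. (\<Sum>j\<in>UNIV. pd f j (\<phi> x) * pd (\<lambda>x. \<phi> x j) k x) * u k)"
      unfolding differential_def
      by (simp add: sum_distrib_left sum_distrib_right mult_ac) (rule sum.swap)
    also have "\<dots> = (\<Sum>k\<in>UNIV. pd (\<lambda>x. f (\<phi> x)) k x * u k)"
      by (simp add: pd_comp[OF van_ideal_poly[OF f] aut_poly[OF phi]])
    also have "\<dots> = 0" using u van_ideal_comp[OF phi f] by (simp add: tangent_space_def)
    finally show ?thesis .
  qed
  then show ?thesis by (simp add: tangent_space_def)
qed

lemma differential_inv:
  assumes phi: "\<phi> \<in> Aut X" and th: "\<theta> \<in> Aut X" and inv: "\<And>z. z \<in> X \<Longrightarrow> \<theta> (\<phi> z) = z"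
    and u: "u \<in> tangent_space X x"
  shows "differential \<theta> (\<phi> x) (differential \<phi> x u) = u"
proof -
  have "differential (\<lambda>z. \<theta> (\<phi> z)) x u i = u i" for i
  proof -
    have cp: "(\<lambda>z. \<theta> (\<phi> z) i) \<in> poly_fun"
      by (rule poly_fun_comp[OF aut_poly[OF th] aut_poly[OF phi]])
    have "(\<lambda>z. \<theta> (\<phi> z) i - z i) \<in> van_ideal X"
      using inv by (intro van_idealI poly_fun_diff cp poly_fun.coord) auto
    then have "(\<Sum>j\<in>UNIV. pd (\<lambda>z. \<theta> (\<phi> z) i - z i) j x * u j) = 0"
      using u by (simp add: tangent_space_def mult.commute)
    then have "(\<Sum>j\<in>UNIV. pd (\<lambda>z. \<theta> (\<phi> z) i) j x * u j) = (\<Sum>j\<in>UNIV. pd (\<lambda>z. z i) j x * u j)"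
      by (simp add: pd_diff[OF cp poly_fun.coord] left_diff_distrib sum_subtractf)
    also have "\<dots> = (\<Sum>j\<in>UNIV. if j = i then u j else 0)"
      by (intro sum.cong) (auto simp: pd_coord)
    also have "\<dots> = u i" by simp
    finally show ?thesis by (simp add: differential_def)
  qed
  then show ?thesis by (simp add: differential_comp[OF phi th, symmetric] fun_eq_iff)
qed

lemma pushforward_at_differential:
  assumes "\<phi> \<in> Aut X" "x \<in> X"
  shows "(\<lambda>i. pushforward X \<phi> v i (\<phi> x)) = differential \<phi> x (\<lambda>j. v j x)"
  using pushforward_at[OF assms] by (simp add: differential_def jac_entry_def fun_eq_iff)

lemma tangent_vector_transport:
  assumes phi: "\<phi> \<in> Aut X" "\<phi> x0 = y" and x0: "x0 \<in> X" and u: "u \<in> tangent_space X y"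
  obtains u' where "u' \<in> tangent_space X x0" "differential \<phi> x0 u' = u"
proof -
  define \<psi> where "\<psi> = inv_aut X \<phi>"
  have psi: "\<psi> \<in> Aut X" "\<psi> y = x0"
    using inv_aut_Aut[OF phi(1)] inv_aut(3)[OF phi(1) x0] phi(2) by (auto simp: \<psi>_def)
  have "differential \<psi> y u \<in> tangent_space X x0"
    using differential_tangent[OF psi(1) u] psi(2) by simp
  moreover have "differential \<phi> x0 (differential \<psi> y u) = u"
    unfolding psi(2)[symmetric]
    by (rule differential_inv[OF psi(1) phi(1) _ u]) (simp add: \<psi>_def inv_aut(4)[OF phi(1)])
  ultimately show ?thesis by (rule that)
qed

text \<open>Transitivity and the generating subset at \<open>x\<^sub>0\<close> make the fibre of the translate module
  at every point of \<open>X\<close> equal to the full tangent space: if \<open>u' = \<Sum> c\<^sub>s d\<phi>\<^sub>s(\<nu>\<^sub>s(x\<^sub>0))\<close> with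
  \<open>\<phi>\<^sub>s\<close> fixing \<open>x\<^sub>0\<close>, then \<open>d\<phi>(u') = \<Sum> c\<^sub>s ((\<phi> \<circ> \<phi>\<^sub>s)\<^sub>* \<nu>\<^sub>s)(y)\<close>.\<close>
lemma translate_module_fibre:
  assumes L: "submodule_VF X L" and tr: "transitive_Aut X" and x0: "x0 \<in> X"
    and F: "F \<subseteq> {(\<lambda>i. \<nu> i x0) | \<nu>. \<nu> \<in> L}" "generating_subset X x0 F"
    and y: "y \<in> X" and u: "u \<in> tangent_space X y"
  shows "\<exists>m\<in>translate_module X L. (\<lambda>i. m i y) = u"
proof -
  obtain \<phi> where phi: "\<phi> \<in> Aut X" "\<phi> x0 = y" using tr x0 y by (auto simp: transitive_Aut_def)
  obtain u' where u': "u' \<in> tangent_space X x0" "differential \<phi> x0 u' = u"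
    using tangent_vector_transport[OF phi x0 u] .
  then have "u' \<in> cspan {differential \<theta> x0 v | \<theta> v. \<theta> \<in> Aut X \<and> \<theta> x0 = x0 \<and> v \<in> F}"
    using F(2) by (simp add: generating_subset_def)
  then obtain S c where S: "finite S"
      "S \<subseteq> {differential \<theta> x0 v | \<theta> v. \<theta> \<in> Aut X \<and> \<theta> x0 = x0 \<and> v \<in> F}"
    and u'_eq: "u' = (\<lambda>j. \<Sum>s\<in>S. c s * s j)"
    unfolding cspan_def by blast
  have "\<forall>s\<in>S. \<exists>\<theta> \<nu>. \<theta> \<in> Aut X \<and> \<theta> x0 = x0 \<and> \<nu> \<in> L \<and> s = differential \<theta> x0 (\<lambda>i. \<nu> i x0)"
    using S(2) F(1) by blast
  then obtain \<theta> \<nu> where th: "\<And>s. s \<in> S \<Longrightarrow> \<theta> s \<in> Aut X \<and> \<theta> s x0 = x0 \<and> \<nu> s \<in> L \<and>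
      s = differential (\<theta> s) x0 (\<lambda>i. \<nu> s i x0)"
    by metis
  define g where "g s = (\<lambda>x. \<phi> (\<theta> s x))" for s
  have g: "g s \<in> Aut X" "g s x0 = y" if "s \<in> S" for s
    using th[OF that] aut_comp[OF _ phi(1), of "\<theta> s"] phi(2) by (auto simp: g_def)
  have ds: "differential \<phi> x0 s = (\<lambda>i. pushforward X (g s) (\<nu> s) i y)" if s: "s \<in> S" for s
  proof -
    have "differential \<phi> x0 s = differential (g s) x0 (\<lambda>i. \<nu> s i x0)"
      unfolding g_def using th[OF s] differential_comp[OF _ phi(1), of "\<theta> s"] by simp
    also have "\<dots> = (\<lambda>i. pushforward X (g s) (\<nu> s) i y)"
      using pushforward_at_differential[OF g(1)[OF s] x0] g(2)[OF s] by simp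
    finally show ?thesis .
  qed
  define m where "m = (\<lambda>i x. \<Sum>s\<in>S. (if x \<in> X then c s else 0) * pushforward X (g s) (\<nu> s) i x)"
  have "m \<in> translate_module X L" unfolding m_def
    by (intro translate_module_sum S(1) translate_module_rmult[OF L] reg_const
        translate_module.gen g) (use th in auto)
  moreover have "(\<lambda>i. m i y) = u"
    using u'(2) y unfolding u'_eq differential_lincomb m_def by (auto intro!: sum.cong simp: ds)
  ultimately show ?thesis by blast
qed

section \<open>Linear algebra: Cramer's rule with columns in a subspace\<close>

text \<open>If the columns of an injective matrix indexed by \<open>K\<close> lie in a subspace \<open>T\<close> of dimension
  \<open>|K|\<close>, they form a basis of \<open>T\<close>; so a solution of \<open>A x = b\<close> with \<open>b \<in> T\<close> is supported on \<open>K\<close>.\<close>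
lemma solution_supported:
  fixes A :: "'a::field^'n^'n"
  assumes inj: "\<And>z. A *v z = 0 \<Longrightarrow> z = 0"
    and cols: "\<And>k. k \<in> K \<Longrightarrow> column k A \<in> T" and dim: "card K = vec.dim T"
    and b: "A *v x \<in> T" and k: "k \<notin> K"
  shows "x $ k = 0"
proof -
  define B where "B = (\<lambda>k. axis k (1::'a)) ` K"
  have col: "A *v axis k 1 = column k A" for k
    by (simp add: vec_eq_iff matrix_vector_mult_def column_def axis_def
        mult.commute[of _ "if _ then _ else _"] if_distrib cong: if_cong)
  have injA: "inj ((*v) A)"
    using inj by (simp add: vec.linear_inj_iff_eq_0[OF matrix_vector_mul_linear_gen])
  have indB: "vec.independent B"
    by (rule vec.independent_mono[OF independent_cart_basis]) (auto simp: B_def cart_basis_def)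
  have "vec.independent ((*v) A ` B)"
    by (rule vec.linear_independent_injective_image[OF matrix_vector_mul_linear_gen indB])
       (use injA in \<open>auto simp: inj_on_def\<close>)
  moreover have "(*v) A ` B \<subseteq> T" using cols col by (auto simp: B_def)
  moreover have "card ((*v) A ` B) = vec.dim T"
  proof -
    have "inj_on (\<lambda>k. A *v axis k (1::'a)) K"
    proof (rule inj_onI)
      fix k l assume "A *v axis k (1::'a) = A *v axis l 1"
      then have "axis k (1::'a) = axis l 1" using injA by (simp add: inj_def)
      then show "k = l" by (simp add: axis_eq_axis)
    qed
    then show ?thesis using dim by (simp add: B_def image_image card_image)
  qed
  ultimately have "T \<subseteq> vec.span ((*v) A ` B)"
    using vec.card_eq_dim[of "(*v) A ` B" T] by (auto simp: B_def)
  then obtain z where z: "z \<in> vec.span B" "A *v x = A *v z"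
    using b by (auto simp: vec.linear_span_image[OF matrix_vector_mul_linear_gen])
  have "vec.span B \<subseteq> {z. z $ k = 0}"
    by (rule vec.span_minimal) (use k in \<open>auto simp: B_def axis_def vec.subspace_def\<close>)
  then show ?thesis using z injA by (auto dest: injD)
qed

lemma cramer_combination:
  fixes A :: "'a::field^'n^'n"
  assumes d: "det A \<noteq> 0"
    and cols: "\<And>k. k \<in> K \<Longrightarrow> column k A \<in> T" and dim: "card K = vec.dim T" and b: "b \<in> T"
  shows "det A *s b = (\<Sum>k\<in>K. det (\<chi> i j. if j = k then b $ i else A $ i $ j) *s column k A)"
proof -
  define x where "x = (\<chi> k. det (\<chi> i j. if j = k then b $ i else A $ i $ j) / det A)"
  have Ax: "A *v x = b" using cramer[OF d] by (simp add: x_def)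
  have inj: "A *v z = 0 \<Longrightarrow> z = 0" for z
    using d by (simp add: invertible_det_nz[symmetric] invertible_left_inverse matrix_left_invertible_ker)
  have "A *v x \<in> T" using Ax b by simp
  then have supp: "x $ k = 0" if "k \<notin> K" for k
    using solution_supported[OF inj cols dim _ that] by blast
  have "b = (\<Sum>k\<in>UNIV. x $ k *s column k A)"
    using Ax by (simp add: matrix_mult_sum)
  also have "\<dots> = (\<Sum>k\<in>K. x $ k *s column k A)"
    using supp by (intro sum.mono_neutral_right) auto
  finally have "det A *s b = (\<Sum>k\<in>K. (det A * x $ k) *s column k A)"
    by (simp add: vec.scale_sum_right)
  then show ?thesis using d by (simp add: x_def)
qed


section \<open>Local generation of vector fields\<close>

definition to_vec :: "('n::finite) pt \<Rightarrow> complex^'n" where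
  "to_vec u = (\<chi> i. u i)"

definition tangent_vecs :: "('n::finite) pt set \<Rightarrow> 'n pt \<Rightarrow> (complex^'n) set" where
  "tangent_vecs X y = to_vec ` tangent_space X y"

definition jacobian :: "(('n::finite) pt \<Rightarrow> 'n pt) \<Rightarrow> 'n pt \<Rightarrow> complex^'n^'n" where
  "jacobian \<phi> x = (\<chi> i j. pd (\<lambda>z. \<phi> z i) j x)"

lemma to_vec_nth[simp]: "to_vec u $ i = u i"
  by (simp add: to_vec_def)

lemma to_vec_differential: "to_vec (differential \<phi> x u) = jacobian \<phi> x *v to_vec u"
  by (simp add: vec_eq_iff differential_def jacobian_def matrix_vector_mult_def)

text \<open>The tangent space at \<open>\<phi> x\<close> is the image of the one at \<open>x\<close> under the Jacobian.\<close>
lemma tangent_vecs_dim_le: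
  assumes phi: "\<phi> \<in> Aut X" and x: "x \<in> X"
  shows "vec.dim (tangent_vecs X (\<phi> x)) \<le> vec.dim (tangent_vecs X x)"
proof -
  have "tangent_vecs X (\<phi> x) \<subseteq> (*v) (jacobian \<phi> x) ` tangent_vecs X x"
  proof
    fix a assume "a \<in> tangent_vecs X (\<phi> x)"
    then obtain u where u: "u \<in> tangent_space X (\<phi> x)" "a = to_vec u"
      by (auto simp: tangent_vecs_def)
    obtain u' where "u' \<in> tangent_space X x" "differential \<phi> x u' = u"
      using tangent_vector_transport[OF phi refl x u(1)] .
    then show "a \<in> (*v) (jacobian \<phi> x) ` tangent_vecs X x"
      unfolding tangent_vecs_def using u(2) to_vec_differential[of \<phi> x] by (metis image_eqI)
  qed
  then have "vec.dim (tangent_vecs X (\<phi> x)) \<le> vec.dim ((*v) (jacobian \<phi> x) ` tangent_vecs X x)"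
    by (rule vec.dim_subset)
  also have "\<dots> \<le> vec.dim (tangent_vecs X x)"
    by (rule vec.dim_image_le[OF matrix_vector_mul_linear_gen])
  finally show ?thesis .
qed

lemma tangent_vecs_dim:
  assumes tr: "transitive_Aut X" and x: "x \<in> X" and y: "y \<in> X"
  shows "vec.dim (tangent_vecs X y) = vec.dim (tangent_vecs X x)"
proof -
  obtain \<phi> where "\<phi> \<in> Aut X" "\<phi> x = y" using tr x y by (auto simp: transitive_Aut_def)
  moreover obtain \<theta> where "\<theta> \<in> Aut X" "\<theta> y = x" using tr x y by (auto simp: transitive_Aut_def)
  ultimately show ?thesis using tangent_vecs_dim_le x y by (metis le_antisym)
qed

lemma poly_fun_det:
  fixes A :: "'m::finite pt \<Rightarrow> complex^'n^'n"
  assumes "\<And>i j. (\<lambda>y. A y $ i $ j) \<in> poly_fun"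
  shows "(\<lambda>y. det (A y)) \<in> poly_fun"
  unfolding det_def
  by (intro poly_fun_sum poly_fun_smult poly_fun_prod assms) (auto simp: finite_permutations)

lemma adapted_basis:
  fixes T :: "('a::field^'n) set"
  shows "\<exists>(e :: 'n \<Rightarrow> 'a^'n) K. (\<forall>k\<in>K. e k \<in> T) \<and> card K = vec.dim T \<and>
           (\<forall>z. (\<Sum>k\<in>UNIV. z $ k *s e k) = 0 \<longrightarrow> z = 0)"
proof -
  obtain B where B: "B \<subseteq> T" "vec.independent B" "T \<subseteq> vec.span B" "card B = vec.dim T"
    by (rule vec.basis_exists)
  obtain B' where B': "B \<subseteq> B'" "vec.independent B'" "UNIV \<subseteq> vec.span B'"
    using vec.maximal_independent_subset_extend[OF subset_UNIV B(2)] by metis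
  have fin: "finite B'" by (rule vec.finiteI_independent[OF B'(2)])
  have "card B' = CARD('n)"
    using vec.basis_card_eq_dim[of B' UNIV] B' by (simp add: card_cart_basis)
  then obtain e where e: "bij_betw e (UNIV::'n set) B'"
    using finite_same_card_bij[of "UNIV::'n set" B'] fin by auto
  define K where "K = {k. e k \<in> B}"
  have "bij_betw e K B" using e B'(1) unfolding K_def bij_betw_def inj_on_def by auto
  then have "card K = vec.dim T" using bij_betw_same_card B(4) by metis
  moreover have "z = 0" if z: "(\<Sum>k\<in>UNIV. z $ k *s e k) = 0" for z
  proof -
    define u where "u b = z $ (inv_into UNIV e b)" for b
    have "(\<Sum>b\<in>B'. u b *s b) = (\<Sum>k\<in>UNIV. u (e k) *s e k)"
      by (rule sum.reindex_bij_betw[OF e, symmetric])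
    also have "\<dots> = 0" using e z by (simp add: u_def bij_betw_def)
    finally have "\<forall>b\<in>B'. u b = 0" using B'(2) vec.dependent_finite[OF fin] by auto
    then show "z = 0"
      using e by (auto simp: vec_eq_iff u_def bij_betw_def)
  qed
  moreover have "\<forall>k\<in>K. e k \<in> T" using B(1) by (auto simp: K_def)
  ultimately show ?thesis by blast
qed

lemma translate_module_frame:
  assumes L: "submodule_VF X L" and tr: "transitive_Aut X" and x0: "x0 \<in> X"
    and F: "F \<subseteq> {(\<lambda>i. \<nu> i x0) | \<nu>. \<nu> \<in> L}" "generating_subset X x0 F" and y0: "y0 \<in> X"
  shows "\<exists>(e :: 'n \<Rightarrow> complex^('n::finite)) K m. card K = vec.dim (tangent_vecs X y0) \<and>
           (\<forall>k\<in>K. m k \<in> translate_module X L \<and> to_vec (\<lambda>i. m k i y0) = e k) \<and>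
           (\<forall>z. (\<Sum>k\<in>UNIV. z $ k *s e k) = 0 \<longrightarrow> z = 0)"
proof -
  obtain e :: "'n \<Rightarrow> complex^'n" and K where eK: "\<forall>k\<in>K. e k \<in> tangent_vecs X y0"
    "card K = vec.dim (tangent_vecs X y0)" "\<forall>z. (\<Sum>k\<in>UNIV. z $ k *s e k) = 0 \<longrightarrow> z = 0"
    using adapted_basis[of "tangent_vecs X y0"] by blast
  have "\<exists>m\<in>translate_module X L. to_vec (\<lambda>i. m i y0) = e k" if k: "k \<in> K" for k
  proof -
    obtain u where "u \<in> tangent_space X y0" "e k = to_vec u"
      using eK(1) k unfolding tangent_vecs_def by blast
    then show ?thesis using translate_module_fibre[OF L tr x0 F y0] by metis
  qed
  then obtain m where "\<forall>k\<in>K. m k \<in> translate_module X L \<and> to_vec (\<lambda>i. m k i y0) = e k"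
    by metis
  with eK(2,3) show ?thesis by blast
qed

lemma cramer_on_tangent_space:
  fixes A :: "complex^'n^'n" and X :: "('n::finite) pt set"
  assumes tr: "transitive_Aut X" and y0: "y0 \<in> X" and y: "y \<in> X"
    and dim: "card K = vec.dim (tangent_vecs X y0)"
    and cols: "\<And>k. k \<in> K \<Longrightarrow> column k A \<in> tangent_vecs X y"
    and v: "v \<in> VF X" and d: "det A \<noteq> 0"
  shows "det A * v i y = (\<Sum>k\<in>K. det (\<chi> i' j. if j = k then v i' y else A $ i' $ j) * A $ i $ k)"
proof -
  have "to_vec (\<lambda>i. v i y) \<in> tangent_vecs X y"
    using VF_tangent[OF v y] by (simp add: tangent_vecs_def)
  moreover have "card K = vec.dim (tangent_vecs X y)"
    using dim tangent_vecs_dim[OF tr y0 y] by simp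
  ultimately have "det A *s to_vec (\<lambda>i. v i y) =
      (\<Sum>k\<in>K. det (\<chi> i' j. if j = k then to_vec (\<lambda>i. v i y) $ i' else A $ i' $ j) *s column k A)"
    using cramer_combination[OF d cols] by blast
  from arg_cong[OF this, of "\<lambda>b. b $ i"] show ?thesis
    by (simp add: column_def cong: if_cong)
qed

text \<open>Every algebraic vector field \<open>v\<close> is, near any point \<open>y\<^sub>0\<close>, a combination of elements of
  the translate module: complete the frame \<open>m\<^sub>k\<close> by constant vectors to a square polynomial
  matrix \<open>A(y)\<close> with \<open>d = det A\<close> and \<open>d(y\<^sub>0) \<noteq> 0\<close>; Cramer's rule gives \<open>d \<cdot> v = \<Sum> h\<^sub>k m\<^sub>k\<close>
  where \<open>d \<noteq> 0\<close>, hence \<open>d\<^sup>2 \<cdot> v\<close> lies in the translate module everywhere.\<close>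
lemma local_generation:
  fixes X :: "('n::finite) pt set"
  assumes L: "submodule_VF X L" and tr: "transitive_Aut X" and x0: "x0 \<in> X"
    and F: "F \<subseteq> {(\<lambda>i. \<nu> i x0) | \<nu>. \<nu> \<in> L}" "generating_subset X x0 F"
    and v: "v \<in> VF X" and y0: "y0 \<in> X"
  shows "\<exists>d\<in>poly_fun. d y0 \<noteq> 0 \<and> (\<lambda>i x. (if x \<in> X then d x else 0) * v i x) \<in> translate_module X L"
proof -
  obtain e :: "'n \<Rightarrow> complex^'n" and K m where K: "card K = vec.dim (tangent_vecs X y0)"
    and m: "\<forall>k\<in>K. m k \<in> translate_module X L \<and> to_vec (\<lambda>i. m k i y0) = e k"
    and e: "\<forall>z. (\<Sum>k\<in>UNIV. z $ k *s e k) = 0 \<longrightarrow> z = 0"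
    using translate_module_frame[OF L tr x0 F y0] by blast
  have mV: "m k \<in> VF X" if "k \<in> K" for k using m that translate_module_VF[OF L] by blast
  have "\<exists>P. (\<forall>i. P i \<in> poly_fun) \<and> (\<forall>i. \<forall>x\<in>X. m k i x = P i x)" if k: "k \<in> K" for k
  proof -
    obtain P where "\<And>i. P i \<in> poly_fun" "\<And>i x. x \<in> X \<Longrightarrow> m k i x = P i x"
      using VF_rep[OF mV[OF k]] by blast
    then show ?thesis by blast
  qed
  then obtain M where M: "\<And>k i. k \<in> K \<Longrightarrow> M k i \<in> poly_fun"
    "\<And>k i x. k \<in> K \<Longrightarrow> x \<in> X \<Longrightarrow> m k i x = M k i x"
    by metis
  obtain V where V: "\<And>i. V i \<in> poly_fun" "\<And>i x. x \<in> X \<Longrightarrow> v i x = V i x"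
    using VF_rep[OF v] by blast
  define A where "A y = (\<chi> i j. if j \<in> K then M j i y else e j $ i)" for y
  define d where "d y = det (A y)" for y
  define h where "h k y = det (\<chi> i j. if j = k then V i y else A y $ i $ j)" for k y
  have A_poly: "(\<lambda>y. A y $ i $ j) \<in> poly_fun" for i j
    by (cases "j \<in> K") (simp_all add: A_def M poly_fun.const)
  have d_poly: "d \<in> poly_fun" unfolding d_def by (rule poly_fun_det[OF A_poly])
  have h_poly: "h k \<in> poly_fun" for k
    unfolding h_def
  proof (rule poly_fun_det)
    show "(\<lambda>y. (\<chi> i j. if j = k then V i y else A y $ i $ j) $ i $ j) \<in> poly_fun" for i j
      by (cases "j = k") (simp_all add: V A_poly)
  qed
  have column_A: "column k (A y) = to_vec (\<lambda>i. m k i y)" if "k \<in> K" "y \<in> X" for k y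
    using that by (simp add: A_def column_def vec_eq_iff M(2))
  have cols: "column k (A y) \<in> tangent_vecs X y" if "k \<in> K" "y \<in> X" for k y
    using VF_tangent[OF mV[OF that(1)] that(2)] column_A[OF that] by (simp add: tangent_vecs_def)
  have "d y0 \<noteq> 0"
  proof -
    have "column k (A y0) = e k" for k
      using column_A[OF _ y0, of k] m by (cases "k \<in> K") (auto simp: A_def column_def vec_eq_iff)
    then have "A y0 *v z = 0 \<Longrightarrow> z = 0" for z
      using e by (simp add: matrix_mult_sum)
    then show ?thesis
      by (simp add: d_def invertible_det_nz[symmetric] invertible_left_inverse matrix_left_invertible_ker)
  qed
  have cramer_at: "d y * v i y = (\<Sum>k\<in>K. h k y * m k i y)" if y: "y \<in> X" "d y \<noteq> 0" for y i
    using cramer_on_tangent_space[OF tr y0 y(1) K cols[OF _ y(1)] v y(2)[unfolded d_def], of i]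
      column_A[OF _ y(1)]
    by (simp add: d_def h_def V(2)[OF y(1)] column_def vec_eq_iff cong: if_cong)
  define g where "g = (\<lambda>i x. \<Sum>k\<in>K. (if x \<in> X then d x * h k x else 0) * m k i x)"
  have "g \<in> translate_module X L"
    unfolding g_def using m by (intro translate_module_sum translate_module_rmult[OF L] regI poly_fun.mult d_poly h_poly) auto
  moreover have "(\<lambda>i x. (if x \<in> X then d x * d x else 0) * v i x) = g"
  proof (intro ext)
    fix i x
    show "(if x \<in> X then d x * d x else 0) * v i x = g i x"
      using cramer_at[of x i]
      by (cases "x \<in> X \<and> d x \<noteq> 0") (auto simp: g_def sum_distrib_left[symmetric] mult.assoc)
  qed
  ultimately show ?thesis
    using \<open>d y0 \<noteq> 0\<close> by (intro bexI[of _ "\<lambda>x. d x * d x"] conjI) (auto intro: poly_fun.mult d_poly)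
qed

section \<open>The weak Nullstellensatz\<close>

definition poly_ideal :: "('n::finite) fn set \<Rightarrow> bool" where
  "poly_ideal J \<longleftrightarrow> J \<subseteq> poly_fun \<and> (\<lambda>x. 0) \<in> J \<and> (\<forall>p\<in>J. \<forall>q\<in>J. (\<lambda>x. p x + q x) \<in> J) \<and>
     (\<forall>p\<in>poly_fun. \<forall>q\<in>J. (\<lambda>x. p x * q x) \<in> J)"

lemma poly_idealD:
  assumes "poly_ideal J"
  shows "J \<subseteq> poly_fun" "(\<lambda>x. 0) \<in> J" "\<And>p q. p \<in> J \<Longrightarrow> q \<in> J \<Longrightarrow> (\<lambda>x. p x + q x) \<in> J"
    "\<And>p q. p \<in> poly_fun \<Longrightarrow> q \<in> J \<Longrightarrow> (\<lambda>x. p x * q x) \<in> J"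
  using assms by (auto simp: poly_ideal_def)

lemma poly_ideal_smult: "poly_ideal J \<Longrightarrow> q \<in> J \<Longrightarrow> (\<lambda>x. c * q x) \<in> J"
  using poly_idealD(4)[of J "\<lambda>x. c" q] by (simp add: poly_fun.const)

lemma poly_ideal_diff: "poly_ideal J \<Longrightarrow> p \<in> J \<Longrightarrow> q \<in> J \<Longrightarrow> (\<lambda>x. p x - q x) \<in> J"
  using poly_idealD(3)[of J p "\<lambda>x. (-1) * q x"] poly_ideal_smult[of J q "-1"] by simp

lemma poly_ideal_sum:
  assumes J: "poly_ideal J"
  shows "finite S \<Longrightarrow> (\<And>s. s \<in> S \<Longrightarrow> f s \<in> J) \<Longrightarrow> (\<lambda>x. \<Sum>s\<in>S. f s x) \<in> J"
proof (induction S rule: finite_induct)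
  case empty then show ?case by (simp add: poly_idealD(2)[OF J])
next
  case (insert a S) then show ?case
    using poly_idealD(3)[OF J, of "f a" "\<lambda>x. \<Sum>s\<in>S. f s x"] by simp
qed

lemma poly_ideal_eq:
  assumes "q \<in> J" "\<And>x. p x = q x"
  shows "p \<in> J"
proof -
  have "p = q" using assms(2) by (rule ext)
  then show ?thesis using assms(1) by simp
qed

lemma poly_ideal_chain_Union:
  assumes C: "C \<noteq> {}" "\<And>I. I \<in> C \<Longrightarrow> poly_ideal I \<and> (\<lambda>x. 1) \<notin> I"
    and chain: "\<And>I I'. I \<in> C \<Longrightarrow> I' \<in> C \<Longrightarrow> I \<subseteq> I' \<or> I' \<subseteq> I"
  shows "poly_ideal (\<Union>C)" "(\<lambda>x. 1) \<notin> \<Union>C"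
proof -
  show "(\<lambda>x. 1) \<notin> \<Union>C" using C(2) by blast
  show "poly_ideal (\<Union>C)"
    unfolding poly_ideal_def
  proof (intro conjI ballI)
    show "\<Union>C \<subseteq> poly_fun" using C(2) poly_idealD(1) by blast
    show "(\<lambda>x. 0) \<in> \<Union>C" using C by (auto simp: poly_ideal_def)
    show "(\<lambda>x. p x + q x) \<in> \<Union>C" if pq: "p \<in> \<Union>C" "q \<in> \<Union>C" for p q
    proof -
      obtain I I' where I: "I \<in> C" "p \<in> I" "I' \<in> C" "q \<in> I'" using pq by blast
      from chain[OF I(1,3)] have "\<exists>K\<in>C. p \<in> K \<and> q \<in> K" using I by blast
      then show ?thesis using C(2) poly_idealD(3) by blast
    qed
    show "(\<lambda>x. p x * q x) \<in> \<Union>C" if p: "p \<in> poly_fun" and q: "q \<in> \<Union>C" for p q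
    proof -
      obtain I where "I \<in> C" "q \<in> I" using q by blast
      then have "(\<lambda>x. p x * q x) \<in> I" using C(2) poly_idealD(4) p by blast
      then show ?thesis using \<open>I \<in> C\<close> by blast
    qed
  qed
qed

lemma maximal_ideal_exists:
  fixes J :: "('n::finite) fn set"
  assumes J: "poly_ideal J" "(\<lambda>x. 1) \<notin> J"
  obtains M where "poly_ideal M" "J \<subseteq> M" "(\<lambda>x. 1) \<notin> M"
    "\<And>M'. poly_ideal M' \<Longrightarrow> M \<subseteq> M' \<Longrightarrow> (\<lambda>x. 1) \<notin> M' \<Longrightarrow> M' = M"
proof -
  define A where "A = {M. poly_ideal M \<and> J \<subseteq> M \<and> (\<lambda>x::'n pt. 1::complex) \<notin> M}"
  have "\<exists>U\<in>A. \<forall>I\<in>C. I \<subseteq> U" if C: "C \<in> chains A" for C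
  proof (cases "C = {}")
    case True then show ?thesis using J by (auto simp: A_def)
  next
    case False
    have CA: "C \<subseteq> A" and ch: "\<And>I I'. I \<in> C \<Longrightarrow> I' \<in> C \<Longrightarrow> I \<subseteq> I' \<or> I' \<subseteq> I"
      using C by (auto simp: chains_def chain_subset_def)
    have "poly_ideal I \<and> (\<lambda>x. 1) \<notin> I" if "I \<in> C" for I using CA that by (auto simp: A_def)
    then have "poly_ideal (\<Union>C)" "(\<lambda>x. 1) \<notin> \<Union>C"
      using poly_ideal_chain_Union[OF False _ ch] by blast+
    moreover have "J \<subseteq> \<Union>C" using CA False by (auto simp: A_def)
    ultimately have "\<Union>C \<in> A" by (simp add: A_def)
    then show ?thesis by blast
  qed
  from Zorn_Lemma2[OF ballI[OF this]] obtain M where M: "M \<in> A" "\<forall>I\<in>A. M \<subseteq> I \<longrightarrow> I = M"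
    by blast
  show ?thesis
  proof (rule that)
    show "poly_ideal M" "J \<subseteq> M" "(\<lambda>x. 1) \<notin> M" using M(1) by (auto simp: A_def)
    show "M' = M" if "poly_ideal M'" "M \<subseteq> M'" "(\<lambda>x. 1) \<notin> M'" for M'
      using M that by (auto simp: A_def)
  qed
qed

locale maximal_poly_ideal =
  fixes M :: "('n::finite) fn set"
  assumes ideal: "poly_ideal M" and proper: "(\<lambda>x. 1) \<notin> M"
    and maximal: "\<And>M'. poly_ideal M' \<Longrightarrow> M \<subseteq> M' \<Longrightarrow> (\<lambda>x. 1) \<notin> M' \<Longrightarrow> M' = M"
begin

text \<open>Polynomials outside \<open>M\<close> are invertible modulo \<open>M\<close>: \<open>M + (f)\<close> is the whole ring.\<close>
lemma inverse_mod:
  assumes f: "f \<in> poly_fun" "f \<notin> M"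
  shows "\<exists>r\<in>poly_fun. (\<lambda>x. r x * f x - 1) \<in> M"
proof -
  define M' where "M' = {g. \<exists>m\<in>M. \<exists>r\<in>poly_fun. g = (\<lambda>x. m x + r x * f x)}"
  have MP: "M \<subseteq> poly_fun" using poly_idealD(1)[OF ideal] .
  have "poly_ideal M'"
    unfolding poly_ideal_def
  proof (intro conjI ballI)
    show "M' \<subseteq> poly_fun" using MP f(1) by (auto simp: M'_def intro!: poly_fun.add poly_fun.mult)
    show "(\<lambda>x. 0) \<in> M'" unfolding M'_def
      by (intro CollectI bexI[OF _ poly_idealD(2)[OF ideal]] bexI[OF _ poly_fun.const[of 0]]) auto
    show "(\<lambda>x. p x + q x) \<in> M'" if "p \<in> M'" "q \<in> M'" for p q
    proof -
      from that obtain m1 r1 m2 r2 where "m1 \<in> M" "r1 \<in> poly_fun" "p = (\<lambda>x. m1 x + r1 x * f x)"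
        "m2 \<in> M" "r2 \<in> poly_fun" "q = (\<lambda>x. m2 x + r2 x * f x)"
        unfolding M'_def by blast
      then show ?thesis unfolding M'_def
        by (intro CollectI bexI[OF _ poly_idealD(3)[OF ideal, of m1 m2]] bexI[OF _ poly_fun.add[of r1 r2]])
           (auto simp: algebra_simps)
    qed
    show "(\<lambda>x. p x * q x) \<in> M'" if "p \<in> poly_fun" "q \<in> M'" for p q
    proof -
      from that(2) obtain m1 r1 where "m1 \<in> M" "r1 \<in> poly_fun" "q = (\<lambda>x. m1 x + r1 x * f x)"
        unfolding M'_def by blast
      then show ?thesis unfolding M'_def using that(1)
        by (intro CollectI bexI[OF _ poly_idealD(4)[OF ideal, of p m1]] bexI[OF _ poly_fun.mult[of p r1]])
           (auto simp: algebra_simps)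
    qed
  qed
  moreover have "M \<subseteq> M'" unfolding M'_def
    by (auto intro!: bexI[OF _ poly_fun.const[of 0]])
  moreover have "f \<in> M'" unfolding M'_def
    by (intro CollectI bexI[OF _ poly_idealD(2)[OF ideal]] bexI[OF _ poly_fun.const[of 1]]) auto
  ultimately have "(\<lambda>x. 1) \<in> M'" using maximal f(2) by blast
  then obtain m r where mr: "m \<in> M" "r \<in> poly_fun" "(\<lambda>x. 1) = (\<lambda>x. m x + r x * f x)"
    by (auto simp: M'_def)
  have "(\<lambda>x. - m x) \<in> M" using poly_ideal_smult[OF ideal mr(1), of "-1"] by simp
  moreover have "r x * f x - 1 = - m x" for x
    using fun_cong[OF mr(3), of x] by (simp add: algebra_simps)
  ultimately have "(\<lambda>x. r x * f x - 1) \<in> M" by (rule poly_ideal_eq)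
  then show ?thesis using mr(2) by blast
qed

lemma prime:
  assumes "p \<in> poly_fun" "q \<in> poly_fun" "(\<lambda>x. p x * q x) \<in> M" "p \<notin> M"
  shows "q \<in> M"
proof -
  obtain r where r: "r \<in> poly_fun" "(\<lambda>x. r x * p x - 1) \<in> M" using inverse_mod assms by blast
  have a: "(\<lambda>x. r x * (p x * q x)) \<in> M" by (rule poly_idealD(4)[OF ideal r(1) assms(3)])
  have b: "(\<lambda>x. q x * (r x * p x - 1)) \<in> M" by (rule poly_idealD(4)[OF ideal assms(2) r(2)])
  show ?thesis using poly_ideal_diff[OF ideal a b] by (rule poly_ideal_eq) (simp add: algebra_simps)
qed

lemma const_notin: "c \<noteq> 0 \<Longrightarrow> (\<lambda>x. c) \<notin> M"
  using poly_ideal_smult[OF ideal, of "\<lambda>x. c" "1/c"] proper by auto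

text \<open>If a nonzero univariate polynomial in \<open>x\<^sub>i\<close> lies in \<open>M\<close>, so does one of its linear factors
  \<open>x\<^sub>i - c\<close> (fundamental theorem of algebra and primality of \<open>M\<close>).\<close>
lemma linear_factor:
  fixes q :: "complex poly"
  assumes "q \<noteq> 0" "(\<lambda>x. poly q (x i)) \<in> M"
  shows "\<exists>c. (\<lambda>x. x i - c) \<in> M"
  using assms
proof (induction "degree q" arbitrary: q rule: less_induct)
  case less
  show ?case
  proof (cases "degree q = 0")
    case True
    then obtain k where "q = [:k:]" by (meson degree_eq_zeroE)
    then show ?thesis using less const_notin by auto
  next
    case False
    have "\<exists>z. poly q z = 0"
      by (rule fundamental_theorem_of_algebra_alt) (use False in auto)
    then obtain z where "poly q z = 0" by blast
    then obtain q' where q': "q = [:-z, 1:] * q'" by (auto simp: poly_eq_0_iff_dvd dvd_def)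
    have q'0: "q' \<noteq> 0" using less(2) q' by auto
    have "degree q = degree [:-z, 1:] + degree q'" unfolding q' by (rule degree_mult_eq) (use q'0 in auto)
    then have dq: "degree q' < degree q" by simp
    have pq: "(\<lambda>x. (x i - z) * poly q' (x i)) \<in> M"
      using less(3) q' by (simp add: algebra_simps)
    show ?thesis
    proof (cases "(\<lambda>x. x i - z) \<in> M")
      case False
      have "(\<lambda>x. poly q' (x i)) \<in> M"
        by (rule prime[OF _ poly_fun_univariate pq False]) (auto intro: poly_fun_diff poly_fun.coord poly_fun.const)
      then show ?thesis using less(1)[OF dq q'0] by blast
    qed blast
  qed
qed

end

definition fscale :: "complex \<Rightarrow> ('a \<Rightarrow> complex) \<Rightarrow> ('a \<Rightarrow> complex)" where
  "fscale c f = (\<lambda>x. c * f x)"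

interpretation fvs: vector_space fscale
  by unfold_locales (auto simp: fscale_def fun_eq_iff algebra_simps)

lemma sum_fun_apply: "(\<Sum>a\<in>A. f a) x = (\<Sum>a\<in>A. f a x)"
  by (induction A rule: infinite_finite_induct) auto

definition monomial :: "('n::finite \<Rightarrow> nat) \<Rightarrow> 'n fn" where
  "monomial a = (\<lambda>x. \<Prod>i\<in>UNIV. x i ^ a i)"

lemma span_monomial_mult:
  fixes p q :: "('n::finite) fn"
  assumes p: "p \<in> fvs.span (range monomial)" and q: "q \<in> fvs.span (range monomial)"
  shows "(\<lambda>x. p x * q x) \<in> fvs.span (range monomial)"
proof -
  have mult_closed: "fvs.subspace {p. (\<lambda>x. p x * q x) \<in> fvs.span (range monomial)}"
    if "q \<in> fvs.span (range monomial)" for q :: "'n fn"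
    unfolding fvs.subspace_def
    using fvs.span_zero fvs.span_add fvs.span_scale that
    by (auto simp: zero_fun_def plus_fun_def fscale_def distrib_right mult.assoc)
  have monomial_left: "(\<lambda>x. monomial a x * q x) \<in> fvs.span (range monomial)"
    if "q \<in> fvs.span (range monomial)" for a :: "'n \<Rightarrow> nat" and q :: "'n fn"
    using that
  proof (induction rule: fvs.span_induct)
    case base
    show ?case unfolding fvs.subspace_def
      using fvs.span_zero fvs.span_add fvs.span_scale
      by (auto simp: zero_fun_def plus_fun_def fscale_def distrib_left mult.left_commute)
  next
    case (step x)
    then obtain b where "x = monomial b" by auto
    then have "(\<lambda>y. monomial a y * x y) = monomial (\<lambda>i. a i + b i)"
      by (simp add: monomial_def power_add prod.distrib)
    then show ?case by (auto intro: fvs.span_base)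
  qed
  show ?thesis
    using p by (induction rule: fvs.span_induct) (use mult_closed q monomial_left in auto)
qed

lemma poly_fun_span_monomials:
  fixes p :: "('n::finite) fn"
  shows "p \<in> poly_fun \<Longrightarrow> p \<in> fvs.span (range monomial)"
proof (induction rule: poly_fun.induct)
  case (const c)
  have "(\<lambda>x::'n pt. 1) = monomial (\<lambda>i. 0)" by (simp add: monomial_def)
  then have "(\<lambda>x::'n pt. 1) \<in> fvs.span (range monomial)" by (auto intro: fvs.span_base)
  then have "fscale c (\<lambda>x::'n pt. 1) \<in> fvs.span (range monomial)" by (rule fvs.span_scale)
  then show ?case by (simp add: fscale_def[of c] del: fscale_def)
next
  case (coord i)
  have "monomial (\<lambda>j. if j = i then 1 else 0) = (\<lambda>x. x i)"
    by (auto simp: monomial_def fun_eq_iff if_distrib[of "\<lambda>n. _ ^ n"] cong: if_cong)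
  then show ?case using fvs.span_base[OF rangeI[of monomial "\<lambda>j. if j = i then 1 else 0"]] by simp
next
  case (add p q) then show ?case using fvs.span_add[of p _ q] by (simp add: plus_fun_def)
next
  case (mult p q) show ?case by (rule span_monomial_mult[OF mult.IH])
qed

lemma poly_fun_finite_span:
  fixes p :: "('n::finite) fn"
  assumes "p \<in> poly_fun"
  shows "\<exists>S. finite S \<and> S \<subseteq> range monomial \<and> p \<in> fvs.span S"
proof -
  obtain t u where t: "finite t" "t \<subseteq> range monomial" "p = (\<Sum>a\<in>t. fscale (u a) a)"
    using poly_fun_span_monomials[OF assms] unfolding fvs.span_explicit by blast
  then have "p \<in> fvs.span t" unfolding fvs.span_explicit by blast
  with t show ?thesis by blast
qed

lemma countable_range_infinite_fibre:
  fixes S :: "complex \<Rightarrow> 'b"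
  assumes "countable (range S)"
  shows "\<exists>c0. infinite (S -` {S c0})"
proof (rule ccontr)
  assume "\<nexists>c0. infinite (S -` {S c0})"
  then have "countable (S -` {A})" if "A \<in> range S" for A
    using that by (blast intro: countable_finite)
  then have "countable (\<Union>A\<in>range S. S -` {A})" by (rule countable_UN[OF assms])
  moreover have "(\<Union>A\<in>range S. S -` {A}) = UNIV" by auto
  ultimately show False using uncountable_UNIV_complex by simp
qed

text \<open>Since the monomials are countable, an uncountable injective family of polynomial
  functions must be linearly dependent: uncountably many members lie in the span of the
  same finite set of monomials.\<close>
lemma poly_fun_family_dependent:
  fixes r :: "complex \<Rightarrow> ('n::finite) fn"
  assumes inj: "inj r" and poly: "\<And>c. r c \<in> poly_fun"
  shows "\<exists>C a. finite C \<and> (\<exists>c\<in>C. a c \<noteq> 0) \<and> (\<forall>x. (\<Sum>c\<in>C. a c * r c x) = 0)"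
proof -
  obtain S where S: "\<And>c. finite (S c)" "\<And>c. S c \<subseteq> range monomial" "\<And>c. r c \<in> fvs.span (S c)"
    using poly_fun_finite_span[OF poly] by metis
  have "countable (range S)"
  proof (rule countable_subset)
    show "range S \<subseteq> {A. finite A \<and> A \<subseteq> range monomial}" using S by auto
    show "countable {A. finite A \<and> A \<subseteq> range (monomial :: ('n \<Rightarrow> nat) \<Rightarrow> 'n fn)}"
      by (intro countable_Collect_finite_subset countable_image) simp
  qed
  then obtain c0 where c0: "infinite (S -` {S c0})"
    using countable_range_infinite_fibre by blast
  define T where "T = r ` (S -` {S c0})"
  have "infinite T"
    unfolding T_def using c0 finite_imageD inj_on_subset[OF inj] by blast
  moreover have "T \<subseteq> fvs.span (S c0)"
    using S(3) by (auto simp: T_def dest: sym[of _ "S c0"] arg_cong[where f = fvs.span])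
  ultimately have "fvs.dependent T"
    using fvs.independent_span_bound[OF S(1)] by blast
  then obtain t u where t: "finite t" "t \<subseteq> T" "(\<Sum>v\<in>t. fscale (u v) v) = 0" "\<exists>v\<in>t. u v \<noteq> 0"
    unfolding fvs.dependent_explicit by blast
  define C where "C = r -` t"
  have "t \<subseteq> range r" using t(2) by (auto simp: T_def)
  then have t_C: "t = r ` C" by (simp add: C_def image_vimage_eq Int_absorb2)
  have "finite C" unfolding C_def using t(1) inj by (simp add: finite_vimageI)
  moreover have "\<exists>c\<in>C. u (r c) \<noteq> 0" using t(4) unfolding t_C by blast
  moreover have "(\<Sum>c\<in>C. u (r c) * r c x) = 0" for x
  proof -
    have "(\<Sum>v\<in>t. fscale (u v) v) x = 0" using t(3) by simp
    then have "(\<Sum>v\<in>t. u v * v x) = 0" by (simp add: sum_fun_apply fscale_def)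
    moreover have "(\<Sum>v\<in>r ` C. u v * v x) = (\<Sum>c\<in>C. u (r c) * r c x)"
      by (rule sum.reindex_cong[OF inj_on_subset[OF inj subset_UNIV] refl refl])
    ultimately show ?thesis unfolding t_C by simp
  qed
  ultimately show ?thesis by (intro exI[of _ C] exI[of _ "\<lambda>c. u (r c)"]) blast
qed

text \<open>A Lagrange-type combination of the polynomials \<open>\<Prod>\<^sub>c\<^sub>' \<^sub>\<noteq> \<^sub>c (t - c')\<close> with a nonzero
  coefficient is a nonzero polynomial (evaluate at that node).\<close>
lemma lagrange_combination_nonzero:
  fixes a :: "complex \<Rightarrow> complex"
  assumes C: "finite C" "c0 \<in> C" and a: "a c0 \<noteq> 0"
  shows "(\<Sum>c\<in>C. smult (a c) (\<Prod>c'\<in>C - {c}. [:-c', 1:])) \<noteq> 0"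
proof -
  have vanish: "(\<Sum>c\<in>C - {c0}. a c * (\<Prod>c'\<in>C - {c}. c0 - c')) = 0"
  proof (intro sum.neutral ballI)
    fix c assume "c \<in> C - {c0}"
    then have "(\<Prod>c'\<in>C - {c}. c0 - c') = 0" using C by (intro prod_zero) auto
    then show "a c * (\<Prod>c'\<in>C - {c}. c0 - c') = 0" by simp
  qed
  have "poly (\<Sum>c\<in>C. smult (a c) (\<Prod>c'\<in>C - {c}. [:-c', 1:])) c0 =
        a c0 * (\<Prod>c'\<in>C - {c0}. c0 - c') + (\<Sum>c\<in>C - {c0}. a c * (\<Prod>c'\<in>C - {c}. c0 - c'))"
    using sum.remove[OF C] by (simp add: poly_sum poly_prod)
  also have "\<dots> \<noteq> 0" using vanish a C by simp
  finally show ?thesis by auto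
qed

context maximal_poly_ideal
begin

lemma inverses_distinct:
  assumes r1: "(\<lambda>x. r x * (x i - c1) - 1) \<in> M" and r2: "(\<lambda>x. r x * (x i - c2) - 1) \<in> M"
    and r: "r \<in> poly_fun"
  shows "c1 = c2"
proof (rule ccontr)
  assume ne: "c1 \<noteq> c2"
  have "(\<lambda>x. (1 / (c2 - c1)) * ((r x * (x i - c1) - 1) - (r x * (x i - c2) - 1))) \<in> M"
    by (rule poly_ideal_smult[OF ideal poly_ideal_diff[OF ideal r1 r2]])
  moreover have "(\<lambda>x. (1 / (c2 - c1)) * ((r x * (x i - c1) - 1) - (r x * (x i - c2) - 1))) = r"
    using ne by (auto simp: fun_eq_iff field_simps)
  ultimately have "r \<in> M" by simp
  then have "(\<lambda>x. (x i - c1) * r x) \<in> M"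
    by (intro poly_idealD(4)[OF ideal]) (auto intro: poly_fun_diff poly_fun.coord poly_fun.const)
  from poly_ideal_diff[OF ideal this r1] show False using proper by (simp add: mult.commute)
qed

text \<open>Otherwise every \<open>x\<^sub>i - c\<close> would be
  invertible modulo \<open>M\<close>; the uncountably many inverses are linearly dependent, and clearing
  denominators in a dependence relation puts a nonzero polynomial in \<open>x\<^sub>i\<close> into \<open>M\<close>.\<close>
lemma coordinate_root: "\<exists>c. (\<lambda>x. x i - c) \<in> M"
proof (rule ccontr)
  assume no_root: "\<nexists>c. (\<lambda>x. x i - c) \<in> M"
  have lin: "(\<lambda>x. x i - c) \<in> poly_fun" for c by (intro poly_fun_diff poly_fun.coord poly_fun.const)
  have "\<forall>c. \<exists>r. r \<in> poly_fun \<and> (\<lambda>x. r x * (x i - c) - 1) \<in> M"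
    using inverse_mod[OF lin] no_root by blast
  from choice[OF this] obtain r
    where "\<forall>c. r c \<in> poly_fun \<and> (\<lambda>x. r c x * (x i - c) - 1) \<in> M" by blast
  then have r: "\<And>c. r c \<in> poly_fun" "\<And>c. (\<lambda>x. r c x * (x i - c) - 1) \<in> M" by auto
  have "inj r"
  proof (rule injI)
    fix c1 c2 assume "r c1 = r c2"
    then show "c1 = c2" using inverses_distinct[OF r(2)[of c1] _ r(1)[of c1]] r(2)[of c2] by simp
  qed
  from poly_fun_family_dependent[OF this r(1)] obtain C a
    where C: "finite C" "\<exists>c\<in>C. a c \<noteq> 0" "\<forall>x. (\<Sum>c\<in>C. a c * r c x) = 0"
    by blast
  define q where "q = (\<Sum>c\<in>C. smult (a c) (\<Prod>c'\<in>C - {c}. [:-c', 1:]))"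
  have "q \<noteq> 0"
    using C(2) lagrange_combination_nonzero[OF C(1)] unfolding q_def by blast
  moreover have "(\<lambda>x. poly q (x i)) \<in> M"
  proof -
    define w where "w c x = a c * (\<Prod>c'\<in>C - {c}. x i - c')" for c x
    have "(\<lambda>x. \<Sum>c\<in>C. w c x * (r c x * (x i - c) - 1)) \<in> M"
      using C(1) by (intro poly_ideal_sum[OF ideal] poly_idealD(4)[OF ideal _ r(2)])
        (auto simp: w_def intro!: poly_fun_smult poly_fun_prod lin)
    moreover have "(\<Sum>c\<in>C. w c x * (r c x * (x i - c) - 1)) = - poly q (x i)" for x
    proof -
      define P where "P = (\<Prod>c'\<in>C. x i - c')"
      have summand: "w c x * (r c x * (x i - c) - 1) = a c * r c x * P - w c x" if "c \<in> C" for c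
      proof -
        have wP: "w c x * (x i - c) = a c * P"
          using prod.remove[OF C(1) that, of "\<lambda>c'. x i - c'"] by (simp add: w_def P_def mult_ac)
        have "w c x * (r c x * (x i - c) - 1) = r c x * (w c x * (x i - c)) - w c x"
          by (simp add: algebra_simps)
        also have "\<dots> = a c * r c x * P - w c x" by (simp add: wP mult_ac)
        finally show ?thesis .
      qed
      have "(\<Sum>c\<in>C. w c x * (r c x * (x i - c) - 1)) = (\<Sum>c\<in>C. a c * r c x) * P - (\<Sum>c\<in>C. w c x)"
        by (simp add: summand sum_subtractf sum_distrib_right)
      also have "\<dots> = - poly q (x i)"
        using C(3) by (simp add: q_def w_def poly_sum poly_prod)
      finally show ?thesis .
    qed
    ultimately have "(\<lambda>x. - poly q (x i)) \<in> M" by simp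
    from poly_ideal_smult[OF ideal this, of "-1"] show ?thesis by simp
  qed
  ultimately show False using linear_factor no_root by blast
qed

definition point :: "'n pt" where
  "point = (\<lambda>i. SOME c. (\<lambda>x. x i - c) \<in> M)"

lemma point_coordinate: "(\<lambda>x. x i - point i) \<in> M"
  unfolding point_def using someI_ex[OF coordinate_root[of i]] by simp

lemma eval_point: "p \<in> poly_fun \<Longrightarrow> (\<lambda>x. p x - p point) \<in> M"
proof (induction rule: poly_fun.induct)
  case (const c) then show ?case using poly_idealD(2)[OF ideal] by simp
next
  case (coord i) then show ?case using point_coordinate by simp
next
  case (add p q)
  show ?case using poly_idealD(3)[OF ideal add.IH] by (rule poly_ideal_eq) (simp add: algebra_simps)
next
  case (mult p q)
  have a: "(\<lambda>x. p x * (q x - q point)) \<in> M" by (rule poly_idealD(4)[OF ideal mult.hyps(1) mult.IH(2)])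
  have b: "(\<lambda>x. q point * (p x - p point)) \<in> M" by (rule poly_ideal_smult[OF ideal mult.IH(1)])
  show ?case using poly_idealD(3)[OF ideal a b] by (rule poly_ideal_eq) (simp add: algebra_simps)
qed

end

theorem weak_nullstellensatz:
  fixes J :: "('n::finite) fn set"
  assumes J: "poly_ideal J" "(\<lambda>x. 1) \<notin> J"
  shows "\<exists>z. \<forall>f\<in>J. f z = 0"
proof -
  obtain M where M: "poly_ideal M" "J \<subseteq> M" "(\<lambda>x. 1) \<notin> M"
    "\<And>M'. poly_ideal M' \<Longrightarrow> M \<subseteq> M' \<Longrightarrow> (\<lambda>x. 1) \<notin> M' \<Longrightarrow> M' = M"
    using maximal_ideal_exists[OF J] by blast
  interpret maximal_poly_ideal M using M by unfold_locales auto
  have "f point = 0" if f: "f \<in> J" for f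
  proof -
    have fM: "f \<in> M" "f \<in> poly_fun" using f M(2) poly_idealD(1)[OF J(1)] by auto
    have "(\<lambda>x. f x - (f x - f point)) \<in> M" by (rule poly_ideal_diff[OF ideal fM(1) eval_point[OF fM(2)]])
    then have "(\<lambda>x. f point) \<in> M" by simp
    then show ?thesis using const_notin by blast
  qed
  then show ?thesis by blast
qed

definition ideal_span :: "('n::finite) fn set \<Rightarrow> 'n fn set" where
  "ideal_span G = {h. \<exists>S a. finite S \<and> S \<subseteq> G \<and> (\<forall>s. a s \<in> poly_fun) \<and>
                        h = (\<lambda>x. \<Sum>s\<in>S. a s x * s x)}"

lemma ideal_span_base: "g \<in> G \<Longrightarrow> g \<in> ideal_span G"
  unfolding ideal_span_def
  by (intro CollectI exI[of _ "{g}"] exI[of _ "\<lambda>s x. 1"]) (auto intro: poly_fun.const)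

lemma poly_ideal_ideal_span:
  assumes G: "G \<subseteq> poly_fun"
  shows "poly_ideal (ideal_span G)"
  unfolding poly_ideal_def
proof (intro conjI ballI)
  show "ideal_span G \<subseteq> poly_fun"
    using G by (auto simp: ideal_span_def intro!: poly_fun_sum poly_fun.mult)
  show "(\<lambda>x. 0) \<in> ideal_span G" unfolding ideal_span_def
    by (intro CollectI exI[of _ "{}"] exI[of _ "\<lambda>s x. 0"]) (auto intro: poly_fun.const)
  show "(\<lambda>x. p x + q x) \<in> ideal_span G" if p: "p \<in> ideal_span G" and q: "q \<in> ideal_span G" for p q
  proof -
    obtain S1 a1 where 1: "finite S1" "S1 \<subseteq> G" "\<forall>s. a1 s \<in> poly_fun"
      "p = (\<lambda>x. \<Sum>s\<in>S1. a1 s x * s x)" using p unfolding ideal_span_def by blast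
    obtain S2 a2 where 2: "finite S2" "S2 \<subseteq> G" "\<forall>s. a2 s \<in> poly_fun"
      "q = (\<lambda>x. \<Sum>s\<in>S2. a2 s x * s x)" using q unfolding ideal_span_def by blast
    define a where "a s = (\<lambda>x. (if s \<in> S1 then a1 s x else 0) + (if s \<in> S2 then a2 s x else 0))" for s
    have "a s \<in> poly_fun" for s
      using 1(3) 2(3) by (cases "s \<in> S1"; cases "s \<in> S2") (auto simp: a_def intro!: poly_fun.add poly_fun.const)
    moreover have "p x + q x = (\<Sum>s\<in>S1 \<union> S2. a s x * s x)" for x
    proof -
      have "(\<Sum>s\<in>S1 \<union> S2. a s x * s x) =
          (\<Sum>s\<in>S1 \<union> S2. if s \<in> S1 then a1 s x * s x else 0) +
          (\<Sum>s\<in>S1 \<union> S2. if s \<in> S2 then a2 s x * s x else 0)"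
        by (subst sum.distrib[symmetric], intro sum.cong refl) (auto simp: a_def algebra_simps)
      also have "\<dots> = p x + q x"
        using 1(1) 2(1) by (simp add: 1(4) 2(4) sum.If_cases Int_absorb1 Int_absorb2)
      finally show ?thesis ..
    qed
    ultimately show ?thesis unfolding ideal_span_def using 1 2
      by (intro CollectI exI[of _ "S1 \<union> S2"] exI[of _ a]) auto
  qed
  show "(\<lambda>x. p x * q x) \<in> ideal_span G" if p: "p \<in> poly_fun" and q: "q \<in> ideal_span G" for p q
  proof -
    obtain S a where "finite S" "S \<subseteq> G" "\<forall>s. a s \<in> poly_fun" "q = (\<lambda>x. \<Sum>s\<in>S. a s x * s x)"
      using q unfolding ideal_span_def by blast
    then show ?thesis unfolding ideal_span_def using p
      by (intro CollectI exI[of _ S] exI[of _ "\<lambda>s x. p x * a s x"])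
         (auto intro: poly_fun.mult simp: sum_distrib_left mult.assoc)
  qed
qed

text \<open>Polynomials without common zero on an algebraic set \<open>X\<close> admit a partition of unity on
  \<open>X\<close>: apply the weak Nullstellensatz to the ideal generated by them and the equations of \<open>X\<close>.\<close>
lemma partition_of_unity:
  fixes X :: "('n::finite) pt set"
  assumes X: "algebraic_set X" and G: "G \<subseteq> poly_fun" and cover: "\<And>y. y \<in> X \<Longrightarrow> \<exists>g\<in>G. g y \<noteq> 0"
  shows "\<exists>S a. finite S \<and> S \<subseteq> G \<and> (\<forall>g. a g \<in> poly_fun) \<and> (\<forall>x\<in>X. (\<Sum>g\<in>S. a g x * g x) = 1)"
proof -
  obtain E where E: "E \<subseteq> poly_fun" "X = {x. \<forall>f\<in>E. f x = 0}"
    using X by (auto simp: algebraic_set_def)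
  have "(\<lambda>x. 1) \<in> ideal_span (E \<union> G)"
  proof (rule ccontr)
    assume "(\<lambda>x. 1) \<notin> ideal_span (E \<union> G)"
    then obtain z where z: "\<forall>f\<in>ideal_span (E \<union> G). f z = 0"
      using weak_nullstellensatz poly_ideal_ideal_span E(1) G by (metis le_sup_iff)
    then have "z \<in> X" using E(2) ideal_span_base[of _ "E \<union> G"] by auto
    then show False using cover z ideal_span_base[of _ "E \<union> G"] by fastforce
  qed
  then obtain S a where S: "finite S" "S \<subseteq> E \<union> G" "\<forall>s. a s \<in> poly_fun"
    "(\<lambda>x. 1) = (\<lambda>x. \<Sum>s\<in>S. a s x * s x)"
    unfolding ideal_span_def by blast
  have "(\<Sum>g\<in>S \<inter> G. a g x * g x) = 1" if x: "x \<in> X" for x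
  proof -
    have "(\<Sum>g\<in>S. a g x * g x) = (\<Sum>g\<in>S \<inter> G. a g x * g x)"
      using S(1,2) x E(2) by (intro sum.mono_neutral_right) auto
    then show ?thesis using fun_cong[OF S(4), of x] by simp
  qed
  then show ?thesis using S(1,3) by (intro exI[of _ "S \<inter> G"] exI[of _ a]) auto
qed

section \<open>The density criterion\<close>

lemma translate_module_glue:
  assumes X: "algebraic_set X" and L: "submodule_VF X L" and v: "v \<in> VF X"
    and local: "\<And>y. y \<in> X \<Longrightarrow>
      \<exists>d\<in>poly_fun. d y \<noteq> 0 \<and> (\<lambda>i x. (if x \<in> X then d x else 0) * v i x) \<in> translate_module X L"
  shows "v \<in> translate_module X L"
proof -
  define G where
    "G = {d \<in> poly_fun. (\<lambda>i x. (if x \<in> X then d x else 0) * v i x) \<in> translate_module X L}"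
  have G: "G \<subseteq> poly_fun" by (auto simp: G_def)
  have cover: "\<exists>d\<in>G. d y \<noteq> 0" if "y \<in> X" for y using local[OF that] by (auto simp: G_def)
  from partition_of_unity[OF X G cover] obtain S a where S: "finite S" "S \<subseteq> G"
    "\<forall>d. a d \<in> poly_fun" "\<forall>x\<in>X. (\<Sum>d\<in>S. a d x * d x) = 1"
    by blast
  have "(\<lambda>i x. (if x \<in> X then a d x else 0) * ((if x \<in> X then d x else 0) * v i x))
        \<in> translate_module X L" if "d \<in> S" for d
    by (rule translate_module_rmult[OF L regI[OF S(3)[rule_format]]]) (use that S(2) in \<open>auto simp: G_def\<close>)
  then have "(\<lambda>i x. \<Sum>d\<in>S. (if x \<in> X then a d x else 0) * ((if x \<in> X then d x else 0) * v i x))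
        \<in> translate_module X L"
    by (rule translate_module_sum[OF S(1)])
  moreover have "(\<Sum>d\<in>S. (if x \<in> X then a d x else 0) * ((if x \<in> X then d x else 0) * v i x)) = v i x"
    for i x
  proof (cases "x \<in> X")
    case True
    have "(\<Sum>d\<in>S. a d x * (d x * v i x)) = (\<Sum>d\<in>S. a d x * d x) * v i x"
      by (simp add: sum_distrib_right mult.assoc)
    with True S(4) show ?thesis by simp
  qed (simp add: VF_out[OF v])
  ultimately show ?thesis by simp
qed

theorem theorem2p20:
  fixes X :: "('n::finite) pt set" and L :: "'n vfield set" and x0 :: "'n pt"
  assumes "algebraic_set X"
    and "transitive_Aut X"
    and "submodule_VF X L"
    and "L \<subseteq> Lie_alg X"
    and "x0 \<in> X"
    and "\<exists>F. F \<subseteq> {(\<lambda>i. \<nu> i x0) | \<nu>. \<nu> \<in> L} \<and> generating_subset X x0 F"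
  shows "algebraic_density_property X"
proof -
  obtain F where F: "F \<subseteq> {(\<lambda>i. \<nu> i x0) | \<nu>. \<nu> \<in> L}" "generating_subset X x0 F"
    using assms(6) by blast
  have "v \<in> Lie_alg X" if v: "v \<in> VF X" for v
  proof -
    have "v \<in> translate_module X L"
      using translate_module_glue[OF assms(1,3) v] local_generation[OF assms(3,2,5) F v] by blast
    then show ?thesis by (rule translate_module_Lie[OF assms(4)])
  qed
  then show ?thesis using Lie_VF unfolding algebraic_density_property_def by blast
qed

end
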